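(* Let $n\geq 1$ and $k\geq 2$ be integers, and let $w$ be a length-$n$ word over $\Sigma_k$. Then $\operatorname{rankB}_k(w)$ can be computed (from $w$ and $k$) in $O(kn^3)$ time using $O(n)$ space, under the unit-cost RAM model.
   Context: $\Sigma_k=\{1,2,\ldots,k\}$ with $1<2<\cdots<k$, and $\Sigma_k^n$ is the set of length-$n$ words over $\Sigma_k$. Lexicographic order: for $x=x_1\cdots x_m$ and $y=y_1\cdots y_n$, $x<y$ if $x$ is a proper prefix of $y$, or if $x_i<y_i$ for the smallest $i$ with $x_i\neq y_i$. A border of a word $w$ is a word that is both a non-empty proper prefix and a non-empty proper suffix of $w$; $w$ is bordered if it has a border and unbordered otherwise. $\operatorname{rankB}_k(w)$ denotes the rank (position, starting from $1$) of $w$ in the lexicographic listing of all bordered words of length $|w|$ over $\Sigma_k$; for an arbitrary word $w$ of length $n$ this is taken to mean $1$ plus the number of length-$n$ bordered words over $\Sigma_k$ that are lexicographically smaller than $w$. Unit-cost RAM model: integer variables use constant space and integer arithmetic operations take constant time. *)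

theory Defs
  imports Main "HOL-Library.Sublist"
begin

definition word_over :: "nat \<Rightarrow> nat list \<Rightarrow> bool" where
  "word_over k w \<longleftrightarrow> set w \<subseteq> {1..k}"

definition lex_less :: "nat list \<Rightarrow> nat list \<Rightarrow> bool" where
  "lex_less x y \<longleftrightarrow> (x, y) \<in> lexord {(a, b). a < b}"

definition bordered :: "nat list \<Rightarrow> bool" where
  "bordered w \<longleftrightarrow> (\<exists>u. u \<noteq> [] \<and> length u < length w \<and> prefix u w \<and> suffix u w)"

definition rankB :: "nat \<Rightarrow> nat list \<Rightarrow> nat" where
  "rankB k w = 1 + card {v. length v = length w \<and> word_over k v \<and> bordered v \<and> lex_less v w}"

text \<open>Memory: cells indexed by naturals, each holding an unbounded integer (unit cost,
  constant space per cell). Registers are just memory cells addressed directly.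
  Indirect addresses are converted with nat (negative addresses map to cell 0).\<close>

datatype instr =
    LoadConst nat int
  | Add nat nat nat
  | Sub nat nat nat
  | Mul nat nat nat
  | Div nat nat nat
  | LoadInd nat nat
  | StoreInd nat nat
  | Jz nat nat
  | Jneg nat nat
  | Jmp nat

type_synonym mem = "nat \<Rightarrow> int"
type_synonym config = "nat \<times> mem"

fun exec :: "instr \<Rightarrow> nat \<Rightarrow> mem \<Rightarrow> config" where
  "exec (LoadConst i c) pc m = (Suc pc, m(i := c))"
| "exec (Add i j l) pc m = (Suc pc, m(i := m j + m l))"
| "exec (Sub i j l) pc m = (Suc pc, m(i := m j - m l))"
| "exec (Mul i j l) pc m = (Suc pc, m(i := m j * m l))"
| "exec (Div i j l) pc m = (Suc pc, m(i := m j div m l))"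
| "exec (LoadInd i j) pc m = (Suc pc, m(i := m (nat (m j))))"
| "exec (StoreInd i j) pc m = (Suc pc, m(nat (m i) := m j))"
| "exec (Jz i l) pc m = (if m i = 0 then l else Suc pc, m)"
| "exec (Jneg i l) pc m = (if m i < 0 then l else Suc pc, m)"
| "exec (Jmp l) pc m = (l, m)"

fun accessed :: "instr \<Rightarrow> mem \<Rightarrow> nat set" where
  "accessed (LoadConst i c) m = {i}"
| "accessed (Add i j l) m = {i, j, l}"
| "accessed (Sub i j l) m = {i, j, l}"
| "accessed (Mul i j l) m = {i, j, l}"
| "accessed (Div i j l) m = {i, j, l}"
| "accessed (LoadInd i j) m = {i, j, nat (m j)}"
| "accessed (StoreInd i j) m = {i, j, nat (m i)}"
| "accessed (Jz i l) m = {i}"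
| "accessed (Jneg i l) m = {i}"
| "accessed (Jmp l) m = {}"

definition step :: "instr list \<Rightarrow> config \<Rightarrow> config" where
  "step P cf = (if fst cf < length P then exec (P ! fst cf) (fst cf) (snd cf) else cf)"

definition run :: "instr list \<Rightarrow> nat \<Rightarrow> config \<Rightarrow> config" where
  "run P t cf = (step P ^^ t) cf"

definition halted :: "instr list \<Rightarrow> config \<Rightarrow> bool" where
  "halted P cf \<longleftrightarrow> length P \<le> fst cf"

definition accessed_at :: "instr list \<Rightarrow> config \<Rightarrow> nat set" where
  "accessed_at P cf = (if fst cf < length P then accessed (P ! fst cf) (snd cf) else {})"

definition used_cells :: "instr list \<Rightarrow> nat \<Rightarrow> config \<Rightarrow> nat set" where
  "used_cells P t cf = (\<Union>i<t. accessed_at P (run P i cf))"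

text \<open>Input encoding: M[0] = k, M[1] = n, M[2+i] = w_(i+1) for i < n, all other cells 0.
  Output convention: the result is in M[0] when the machine halts.\<close>
definition input_mem :: "nat \<Rightarrow> nat list \<Rightarrow> mem" where
  "input_mem k w = (\<lambda>a. if a = 0 then int k else if a = 1 then int (length w)
                        else if a < length w + 2 then int (w ! (a - 2)) else 0)"

definition init_config :: "nat \<Rightarrow> nat list \<Rightarrow> config" where
  "init_config k w = (0, input_mem k w)"

end

theory Submission
  imports Defs
begin

text \<open>Every bordered word \<open>v < w\<close> of length \<open>n\<close> first differs from \<open>w\<close> at some position \<open>i\<close>, where it
  carries a letter \<open>a < w ! i\<close>; so \<open>rankB k w - 1\<close> is the sum, over the at most \<open>k n\<close> candidate
  prefixes \<open>p = take i w @ [a]\<close>, of the number \<open>B(p, n)\<close> of bordered words of length \<open>n\<close> with prefix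
  \<open>p\<close>. The shortest border \<open>u\<close> of a bordered word \<open>x\<close> is unbordered and at most half as long as
  \<open>x\<close>, and it is the only border with these two properties. Writing \<open>x = u y u\<close> therefore gives
  \<open>B(p, L)\<close> as the sum over \<open>j \<le> L/2\<close> of \<open>U(p, j) c(p, L, j)\<close>, where \<open>U(p, j) = k ^ (j - |p|) - B(p, j)\<close>
  counts the unbordered words and the coefficient \<open>c(p, L, j)\<close> is a power of \<open>k\<close> or, when the
  second copy of \<open>u\<close> overlaps \<open>p\<close>, the test whether \<open>p\<close> has period \<open>L - j\<close>. Computing \<open>B(p, L)\<close> for
  increasing \<open>L\<close> costs \<open>O(n\<^sup>2)\<close> operations per candidate, \<open>O(k n\<^sup>3)\<close> in all, and needs only the
  values \<open>U(p, j)\<close>, the powers of \<open>k\<close> and the periods of the current prefix of \<open>w\<close>: \<open>O(n)\<close> cells.\<close>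

section \<open>Counting bordered words with a given prefix\<close>

definition words :: "nat \<Rightarrow> nat \<Rightarrow> nat list set" where
  "words k L = {x. length x = L \<and> set x \<subseteq> {1..k}}"

lemma card_words: "card (words k L) = k ^ L"
  using card_lists_length_eq[of "{1..k}" L] by (simp add: words_def conj_commute)

lemma finite_words: "finite (words k L)"
  using finite_lists_length_eq[of "{1..k}" L] by (simp add: words_def conj_commute)

lemma words_0 [simp]: "words k 0 = {[]}"
  by (auto simp: words_def)

text \<open>Prescribes the prefix \<open>p\<close>, also to words shorter than \<open>p\<close>.\<close>
definition agrees :: "nat list \<Rightarrow> nat list \<Rightarrow> bool" where
  "agrees p x \<longleftrightarrow> (\<forall>t. t < length p \<longrightarrow> t < length x \<longrightarrow> x ! t = p ! t)"

lemma agrees_Nil [simp]: "agrees [] x"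
  by (simp add: agrees_def)

lemma agrees_append: "agrees p (u @ v) \<longleftrightarrow> agrees p u \<and> agrees (drop (length u) p) v"
  unfolding agrees_def
proof (intro iffI conjI allI impI)
  fix t
  assume h: "\<forall>t. t < length p \<longrightarrow> t < length (u @ v) \<longrightarrow> (u @ v) ! t = p ! t"
  show "u ! t = p ! t" if "t < length p" "t < length u"
    using that h[rule_format, of t] by (simp add: nth_append)
  show "v ! t = drop (length u) p ! t" if "t < length (drop (length u) p)" "t < length v"
    using that h[rule_format, of "length u + t"] by (simp add: nth_append)
next
  fix t
  assume "(\<forall>t. t < length p \<longrightarrow> t < length u \<longrightarrow> u ! t = p ! t) \<and>
    (\<forall>t. t < length (drop (length u) p) \<longrightarrow> t < length v \<longrightarrow> v ! t = drop (length u) p ! t)"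
    and "t < length p" "t < length (u @ v)"
  then show "(u @ v) ! t = p ! t" by (cases "t < length u") (auto simp: nth_append)
qed

lemma agrees_words_eq_image:
  assumes "set p \<subseteq> {1..k}"
  shows "{x \<in> words k L. agrees p x} = (\<lambda>z. take L p @ z) ` words k (L - length p)"
proof (intro set_eqI iffI)
  fix x assume "x \<in> {x \<in> words k L. agrees p x}"
  then have x: "length x = L" "set x \<subseteq> {1..k}" "agrees p x" by (auto simp: words_def)
  let ?r = "min L (length p)"
  have "take ?r x = take L p"
    by (rule nth_equalityI) (use x in \<open>auto simp: agrees_def\<close>)
  then have "x = take L p @ drop ?r x" by (metis append_take_drop_id)
  moreover have "drop ?r x \<in> words k (L - length p)"
    using x by (auto simp: words_def dest: in_set_dropD)
  ultimately show "x \<in> (\<lambda>z. take L p @ z) ` words k (L - length p)" by blast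
next
  fix x assume "x \<in> (\<lambda>z. take L p @ z) ` words k (L - length p)"
  then obtain z where "z \<in> words k (L - length p)" "x = take L p @ z" by blast
  then show "x \<in> {x \<in> words k L. agrees p x}"
    using assms by (auto simp: words_def agrees_def nth_append dest: in_set_takeD)
qed

lemma card_agrees:
  assumes "set p \<subseteq> {1..k}"
  shows "card {x \<in> words k L. agrees p x} = k ^ (L - length p)"
  unfolding agrees_words_eq_image[OF assms]
  by (subst card_image) (auto simp: inj_on_def card_words)

lemma agrees_words_short:
  assumes "L \<le> length p" "set p \<subseteq> {1..k}"
  shows "{x \<in> words k L. agrees p x} = {take L p}"
  using agrees_words_eq_image[OF assms(2), of L] assms(1) by simp

definition num_bordered :: "nat \<Rightarrow> nat list \<Rightarrow> nat \<Rightarrow> nat" where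
  "num_bordered k p L = card {x \<in> words k L. agrees p x \<and> bordered x}"

definition num_unbordered :: "nat \<Rightarrow> nat list \<Rightarrow> nat \<Rightarrow> nat" where
  "num_unbordered k p L = card {x \<in> words k L. agrees p x \<and> \<not> bordered x}"

lemma num_bordered_add_num_unbordered:
  assumes "set p \<subseteq> {1..k}"
  shows "num_bordered k p L + num_unbordered k p L = k ^ (L - length p)"
proof -
  have "num_bordered k p L + num_unbordered k p L
      = card ({x \<in> words k L. agrees p x \<and> bordered x} \<union> {x \<in> words k L. agrees p x \<and> \<not> bordered x})"
    unfolding num_bordered_def num_unbordered_def
    by (rule card_Un_disjoint[symmetric]) (auto intro: finite_subset[OF _ finite_words])
  also have "\<dots> = card {x \<in> words k L. agrees p x}"
    by (rule arg_cong[where f = card]) auto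
  finally show ?thesis using card_agrees[OF assms] by simp
qed

lemma num_unbordered_short:
  assumes "L \<le> length p" "set p \<subseteq> {1..k}"
  shows "num_unbordered k p L = (if bordered (take L p) then 0 else 1)"
proof -
  have "{x \<in> words k L. agrees p x \<and> \<not> bordered x} = {x. x = take L p \<and> \<not> bordered x}"
    using agrees_words_short[OF assms] by blast
  also have "\<dots> = (if bordered (take L p) then {} else {take L p})"
    by auto
  finally show ?thesis unfolding num_unbordered_def by simp
qed

definition has_border :: "nat list \<Rightarrow> nat \<Rightarrow> bool" where
  "has_border x b \<longleftrightarrow> 0 < b \<and> b < length x \<and> (\<forall>t<b. x ! t = x ! (length x - b + t))"

lemma bordered_iff_has_border: "bordered x \<longleftrightarrow> (\<exists>b. has_border x b)"
proof
  assume "bordered x"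
  then obtain u where u: "u \<noteq> []" "length u < length x" "prefix u x" "suffix u x"
    unfolding bordered_def by auto
  from u(3) obtain zs where zs: "x = u @ zs" by (auto simp: prefix_def)
  from u(4) obtain ys where ys: "x = ys @ u" by (auto simp: suffix_def)
  have "has_border x (length u)"
    unfolding has_border_def
  proof (intro conjI allI impI)
    show "0 < length u" "length u < length x" using u(1,2) by simp_all
    fix t assume "t < length u"
    have "x ! t = u ! t" using zs \<open>t < length u\<close> by (simp add: nth_append)
    moreover have "x ! (length x - length u + t) = u ! t" using ys by (simp add: nth_append)
    ultimately show "x ! t = x ! (length x - length u + t)" by simp
  qed
  then show "\<exists>b. has_border x b" by blast
next
  assume "\<exists>b. has_border x b"
  then obtain b where b: "0 < b" "b < length x" "\<forall>t<b. x ! t = x ! (length x - b + t)"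
    unfolding has_border_def by auto
  have eq: "drop (length x - b) x = take b x"
    by (rule nth_equalityI) (use b in auto)
  show "bordered x" unfolding bordered_def
  proof (intro exI conjI)
    show "take b x \<noteq> []" "length (take b x) < length x" using b by (auto simp: take_eq_Nil)
    show "prefix (take b x) x" by (rule take_is_prefix)
    show "suffix (take b x) x" unfolding eq[symmetric] by (rule suffix_drop)
  qed
qed

lemma has_border_take:
  assumes "has_border (take b x) c" "has_border x b"
  shows "has_border x c"
proof -
  from assms have b: "b < length x" "\<forall>t<b. x ! t = x ! (length x - b + t)"
    and c: "0 < c" "c < b" "\<forall>t<c. take b x ! t = take b x ! (b - c + t)"
    by (auto simp: has_border_def)
  show ?thesis unfolding has_border_def
  proof (intro conjI allI impI)
    show "0 < c" "c < length x" using b c by auto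
    fix t assume t: "t < c"
    have "x ! t = x ! (b - c + t)" using c(2,3) t by auto
    also have "\<dots> = x ! (length x - b + (b - c + t))" using b(2) t c(2) by auto
    also have "length x - b + (b - c + t) = length x - c + t" using t c(2) b(1) by auto
    finally show "x ! t = x ! (length x - c + t)" .
  qed
qed

lemma has_border_prefix:
  assumes "has_border x a" "has_border x b" "a < b"
  shows "has_border (take b x) a"
proof -
  let ?L = "length x"
  from assms have a: "0 < a" "\<forall>t<a. x ! t = x ! (?L - a + t)"
    and b: "b < ?L" "\<forall>t<b. x ! t = x ! (?L - b + t)"
    by (auto simp: has_border_def)
  show ?thesis unfolding has_border_def
  proof (intro conjI allI impI)
    show "0 < a" "a < length (take b x)" using a b assms(3) by auto
    fix t assume t: "t < a"
    have "take b x ! (length (take b x) - a + t) = x ! (b - a + t)"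
      using t assms(3) b(1) by auto
    also have "\<dots> = x ! (?L - b + (b - a + t))" using b(2) t assms(3) by auto
    also have "?L - b + (b - a + t) = ?L - a + t" using t assms(3) b(1) by auto
    also have "x ! \<dots> = take b x ! t" using a(2) t assms(3) by auto
    finally show "take b x ! t = take b x ! (length (take b x) - a + t)" by simp
  qed
qed

text \<open>Two overlapping occurrences of a border of length \<open>b > |x|/2\<close> overlap in a shorter border.\<close>
lemma has_border_overlap:
  assumes "has_border x b" "length x < 2 * b"
  shows "has_border x (2 * b - length x)"
proof -
  let ?L = "length x"
  from assms have b: "b < ?L" "\<forall>t<b. x ! t = x ! (?L - b + t)"
    by (auto simp: has_border_def)
  show ?thesis unfolding has_border_def
  proof (intro conjI allI impI)
    show "0 < 2 * b - ?L" "2 * b - ?L < ?L" using assms b by auto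
    fix t assume t: "t < 2 * b - ?L"
    have "?L - (2 * b - ?L) + t = ?L - b + (?L - b + t)" "?L - b + t < b" "t < b"
      using t b assms by linarith+
    then show "x ! t = x ! (?L - (2 * b - ?L) + t)" using b(2) by metis
  qed
qed

definition unbordered_border :: "nat list \<Rightarrow> nat \<Rightarrow> bool" where
  "unbordered_border x j \<longleftrightarrow> has_border x j \<and> 2 * j \<le> length x \<and> \<not> bordered (take j x)"

text \<open>The shortest border of a bordered word is unbordered and at most half as long as the word.\<close>
lemma bordered_iff_unbordered_border: "bordered x \<longleftrightarrow> (\<exists>j. unbordered_border x j)"
proof
  assume "bordered x"
  then obtain b0 where "has_border x b0" using bordered_iff_has_border by auto
  define b where "b = (LEAST b. has_border x b)"
  have border: "has_border x b" unfolding b_def by (rule LeastI) fact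
  have least: "\<And>c. has_border x c \<Longrightarrow> b \<le> c" unfolding b_def by (rule Least_le)
  have "2 * b \<le> length x"
  proof (rule ccontr)
    assume "\<not> 2 * b \<le> length x"
    then have "b \<le> 2 * b - length x" using least has_border_overlap border by simp
    then show False using border by (auto simp: has_border_def)
  qed
  moreover have "\<not> bordered (take b x)"
  proof
    assume "bordered (take b x)"
    then obtain c where c: "has_border (take b x) c" using bordered_iff_has_border by auto
    then have "b \<le> c" using has_border_take border least by blast
    then show False using c border by (auto simp: has_border_def)
  qed
  ultimately show "\<exists>j. unbordered_border x j" using border unfolding unbordered_border_def by blast
next
  assume "\<exists>j. unbordered_border x j"
  then show "bordered x" using bordered_iff_has_border by (auto simp: unbordered_border_def)
qed

lemma unbordered_border_unique:
  assumes "unbordered_border x i" "unbordered_border x j"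
  shows "i = j"
proof -
  have False if "unbordered_border x a" "unbordered_border x b" "a < b" for a b
    using that has_border_prefix[of x a b] bordered_iff_has_border[of "take b x"]
    by (auto simp: unbordered_border_def)
  then show ?thesis using assms by (metis linorder_neqE_nat)
qed

lemma unbordered_border_iff_split:
  assumes "length x = L" "1 \<le> j" "2 * j \<le> L"
  shows "unbordered_border x j \<longleftrightarrow>
    (\<exists>u y. x = u @ y @ u \<and> length u = j \<and> length y = L - 2 * j \<and> \<not> bordered u)"
proof
  assume x: "unbordered_border x j"
  define u where "u = take j x"
  define y where "y = take (L - 2 * j) (drop j x)"
  have "drop (L - j) x = u"
    by (rule nth_equalityI) (use x assms in \<open>auto simp: u_def unbordered_border_def has_border_def\<close>)
  moreover have "drop (L - 2 * j) (drop j x) = drop (L - j) x" using assms by (simp add: algebra_simps)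
  ultimately have "x = u @ y @ u"
    unfolding u_def y_def by (metis append_take_drop_id)
  moreover have "length u = j" "length y = L - 2 * j" using assms by (auto simp: u_def y_def)
  ultimately show "\<exists>u y. x = u @ y @ u \<and> length u = j \<and> length y = L - 2 * j \<and> \<not> bordered u"
    using x unfolding unbordered_border_def u_def by blast
next
  assume "\<exists>u y. x = u @ y @ u \<and> length u = j \<and> length y = L - 2 * j \<and> \<not> bordered u"
  then obtain u y where x: "x = u @ y @ u" "length u = j" "length y = L - 2 * j" "\<not> bordered u"
    by blast
  have "L - j + t = length u + length y + t" for t using x assms by simp
  then have "has_border x j" using x assms by (auto simp: has_border_def nth_append)
  then show "unbordered_border x j" using x assms by (simp add: unbordered_border_def)
qed

lemma agrees_split:
  assumes "length u = j" "length y = L - 2 * j" "2 * j \<le> L"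
  shows "agrees p (u @ y @ u) \<longleftrightarrow> agrees p u \<and> agrees (drop j p) y \<and> agrees (drop (L - j) p) u"
proof -
  have "drop (length y) (drop j p) = drop (L - j) p" using assms by (simp add: algebra_simps)
  then show ?thesis using assms by (simp add: agrees_append)
qed

definition has_period :: "nat list \<Rightarrow> nat \<Rightarrow> bool" where
  "has_period p d \<longleftrightarrow> (\<forall>t. d + t < length p \<longrightarrow> p ! (d + t) = p ! t)"

lemma has_period_ge_length: "length p \<le> d \<Longrightarrow> has_period p d"
  by (auto simp: has_period_def)

lemma has_period_snoc:
  assumes "1 \<le> d" "d \<le> length p"
  shows "has_period (p @ [a]) d \<longleftrightarrow> has_period p d \<and> a = p ! (length p - d)"
proof
  assume h: "has_period (p @ [a]) d"
  have "has_period p d" unfolding has_period_def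
  proof (intro allI impI)
    fix t assume "d + t < length p"
    then show "p ! (d + t) = p ! t"
      using h[unfolded has_period_def, rule_format, of t] by (auto simp: nth_append)
  qed
  moreover have "a = p ! (length p - d)"
    using h[unfolded has_period_def, rule_format, of "length p - d"] assms
    by (auto simp: nth_append split: if_splits)
  ultimately show "has_period p d \<and> a = p ! (length p - d)" by simp
next
  assume h: "has_period p d \<and> a = p ! (length p - d)"
  show "has_period (p @ [a]) d" unfolding has_period_def
  proof (intro allI impI)
    fix t assume t: "d + t < length (p @ [a])"
    show "(p @ [a]) ! (d + t) = (p @ [a]) ! t"
    proof (cases "d + t < length p")
      case True
      then show ?thesis using h assms by (auto simp: nth_append has_period_def)
    next
      case False
      then have "d + t = length p" "t = length p - d" using t by simp_all
      then show ?thesis using h by (simp add: nth_append)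
    qed
  qed
qed

lemma agrees_drop_take_iff_has_period:
  assumes "L - j < length p" "length p \<le> L" "j \<le> L"
  shows "agrees (drop (L - j) p) (take j p) \<longleftrightarrow> has_period p (L - j)"
  using assms unfolding agrees_def has_period_def by (auto simp: less_diff_conv2)

text \<open>The number of ways to complete an unbordered word \<open>u\<close> of length \<open>j\<close> that agrees with \<open>p\<close>
  to a word \<open>u y u\<close> of length \<open>L\<close> that agrees with \<open>p\<close>: if the second copy of \<open>u\<close> lies beyond
  \<open>p\<close>, only the letters of \<open>y\<close> not fixed by \<open>p\<close> are free; otherwise \<open>u y u\<close> is forced and
  consistent with \<open>p\<close> iff \<open>p\<close> has period \<open>L - j\<close>.\<close>
definition border_coef :: "nat \<Rightarrow> nat list \<Rightarrow> nat \<Rightarrow> nat \<Rightarrow> nat" where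
  "border_coef k p L j = (if length p \<le> L - j then k ^ (L - j - max j (length p))
     else if has_period p (L - j) then 1 else 0)"

lemma unbordered_border_words_eq:
  assumes "1 \<le> j" "2 * j \<le> L"
  shows "{x \<in> words k L. agrees p x \<and> unbordered_border x j}
    = (\<lambda>(u, y). u @ y @ u) ` ({u \<in> words k j. agrees p u \<and> \<not> bordered u \<and> agrees (drop (L - j) p) u}
        \<times> {y \<in> words k (L - 2 * j). agrees (drop j p) y})"
  (is "?S = ?F ` (?U \<times> ?Y)")
proof (intro set_eqI iffI)
  fix x assume "x \<in> ?S"
  then have x: "length x = L" "set x \<subseteq> {1..k}" "agrees p x" "unbordered_border x j"
    by (auto simp: words_def)
  then obtain u y where uy: "x = u @ y @ u" "length u = j" "length y = L - 2 * j" "\<not> bordered u"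
    using unbordered_border_iff_split[OF x(1) assms] by blast
  then have "u \<in> ?U" "y \<in> ?Y"
    using x agrees_split[OF uy(2,3) assms(2)] by (auto simp: words_def)
  then show "x \<in> ?F ` (?U \<times> ?Y)"
    using uy(1) by (intro rev_image_eqI[of "(u, y)"]) auto
next
  fix x assume "x \<in> ?F ` (?U \<times> ?Y)"
  then obtain u y where "u \<in> ?U" "y \<in> ?Y" "x = u @ y @ u" by auto
  then have uy: "x = u @ y @ u" "length u = j" "length y = L - 2 * j" "\<not> bordered u"
    "set u \<subseteq> {1..k}" "set y \<subseteq> {1..k}" "agrees p u" "agrees (drop j p) y" "agrees (drop (L - j) p) u"
    by (auto simp: words_def)
  then have "length x = L" using assms by simp
  then show "x \<in> ?S"
    using uy unbordered_border_iff_split[OF _ assms] agrees_split[OF uy(2,3) assms(2)]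
    by (auto simp: words_def)
qed

lemma card_unbordered_border_words:
  assumes j: "1 \<le> j" "2 * j \<le> L" and p: "length p \<le> L" "set p \<subseteq> {1..k}"
  shows "card {x \<in> words k L. agrees p x \<and> unbordered_border x j}
    = num_unbordered k p j * border_coef k p L j"
proof -
  let ?U = "{u \<in> words k j. agrees p u \<and> \<not> bordered u \<and> agrees (drop (L - j) p) u}"
  let ?Y = "{y \<in> words k (L - 2 * j). agrees (drop j p) y}"
  have "inj_on (\<lambda>(u, y). u @ y @ u) (?U \<times> ?Y)"
  proof (rule inj_onI)
    fix a b assume "a \<in> ?U \<times> ?Y" "b \<in> ?U \<times> ?Y" "(\<lambda>(u, y). u @ y @ u) a = (\<lambda>(u, y). u @ y @ u) b"
    moreover obtain u y u' y' where "a = (u, y)" "b = (u', y')" by fastforce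
    ultimately show "a = b" by (simp add: words_def append_eq_append_conv)
  qed
  then have card_S: "card {x \<in> words k L. agrees p x \<and> unbordered_border x j} = card ?U * card ?Y"
    unfolding unbordered_border_words_eq[OF j] by (simp add: card_image card_cartesian_product)
  have "set (drop j p) \<subseteq> {1..k}" using p by (auto dest: in_set_dropD)
  then have card_Y: "card ?Y = k ^ (L - 2 * j - (length p - j))"
    using card_agrees by simp
  show ?thesis
  proof (cases "length p \<le> L - j")
    case True
    then have "card ?U = num_unbordered k p j" by (simp add: num_unbordered_def)
    moreover have "L - 2 * j - (length p - j) = L - j - max j (length p)"
      using True j by (auto simp: max_def)
    ultimately show ?thesis using card_S card_Y True by (simp add: border_coef_def)
  next
    case False
    then have jp: "j \<le> length p" using j by linarith
    have "?U = {x. x = take j p \<and> \<not> bordered x \<and> agrees (drop (L - j) p) x}"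
      using agrees_words_short[OF jp p(2)] by blast
    also have "\<dots> = (if \<not> bordered (take j p) \<and> has_period p (L - j) then {take j p} else {})"
      using agrees_drop_take_iff_has_period[of L j p] False p j by auto
    finally have "card ?U = num_unbordered k p j * (if has_period p (L - j) then 1 else 0)"
      using num_unbordered_short[OF jp p(2)] by simp
    moreover have "L - 2 * j - (length p - j) = 0" using False by linarith
    ultimately show ?thesis using card_S card_Y False by (simp add: border_coef_def)
  qed
qed

lemma unbordered_border_range: "unbordered_border x j \<Longrightarrow> j \<in> {1..length x div 2}"
  by (auto simp: unbordered_border_def has_border_def)

text \<open>Classifying bordered words by the length of their shortest border.\<close>
theorem num_bordered_eq_sum:
  assumes "length p \<le> L" "set p \<subseteq> {1..k}"
  shows "num_bordered k p L = (\<Sum>j\<in>{1..L div 2}. num_unbordered k p j * border_coef k p L j)"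
proof -
  let ?S = "\<lambda>j. {x \<in> words k L. agrees p x \<and> unbordered_border x j}"
  have "{x \<in> words k L. agrees p x \<and> bordered x} = (\<Union>j\<in>{1..L div 2}. ?S j)"
  proof (intro set_eqI iffI)
    fix x assume "x \<in> {x \<in> words k L. agrees p x \<and> bordered x}"
    moreover from this obtain j where "unbordered_border x j"
      using bordered_iff_unbordered_border by auto
    moreover note unbordered_border_range[OF this]
    ultimately show "x \<in> (\<Union>j\<in>{1..L div 2}. ?S j)" by (auto simp: words_def)
  qed (use bordered_iff_unbordered_border in blast)
  then have "num_bordered k p L = card (\<Union>j\<in>{1..L div 2}. ?S j)"
    unfolding num_bordered_def by simp
  also have "\<dots> = (\<Sum>j\<in>{1..L div 2}. card (?S j))"
  proof (rule card_UN_disjoint)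
    show "\<forall>j\<in>{1..L div 2}. finite (?S j)" using finite_words by simp
    show "\<forall>i\<in>{1..L div 2}. \<forall>j\<in>{1..L div 2}. i \<noteq> j \<longrightarrow> ?S i \<inter> ?S j = {}"
      using unbordered_border_unique by blast
  qed simp
  also have "\<dots> = (\<Sum>j\<in>{1..L div 2}. num_unbordered k p j * border_coef k p L j)"
    by (rule sum.cong) (use card_unbordered_border_words assms in auto)
  finally show ?thesis .
qed

lemma agrees_take_snoc:
  assumes "i < length w" "length v = length w"
  shows "agrees (take i w @ [a]) v \<longleftrightarrow> take i v = take i w \<and> v ! i = a"
proof -
  have "agrees (take i w @ [a]) v \<longleftrightarrow> (\<forall>t<i. v ! t = w ! t) \<and> v ! i = a"
    unfolding agrees_def using assms
    by (auto simp: nth_append min_def) (metis less_antisym)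
  moreover have "take i v = take i w \<longleftrightarrow> (\<forall>t<i. v ! t = w ! t)"
    using assms by (auto simp: list_eq_iff_nth_eq min_def)
  ultimately show ?thesis by simp
qed

text \<open>A word below \<open>w\<close> first differs from \<open>w\<close> at some position \<open>i\<close>, where it carries a smaller
  letter \<open>a\<close>.\<close>
lemma bordered_below_eq_UN:
  assumes "word_over k w"
  shows "{v. length v = length w \<and> word_over k v \<and> bordered v \<and> lex_less v w}
    = (\<Union>(i, a)\<in>Sigma {..<length w} (\<lambda>i. {1..<w ! i}).
         {x \<in> words k (length w). agrees (take i w @ [a]) x \<and> bordered x})"
proof (intro set_eqI iffI)
  fix v assume "v \<in> {v. length v = length w \<and> word_over k v \<and> bordered v \<and> lex_less v w}"
  then have v: "length v = length w" "set v \<subseteq> {1..k}" "bordered v" "lex_less v w"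
    by (auto simp: word_over_def)
  from v(4) obtain i where i: "i < length w" "take i v = take i w" "v ! i < w ! i"
    unfolding lex_less_def lexord_take_index_conv using v(1) by auto
  have "v ! i \<in> set v" using i v(1) by simp
  then have "v ! i \<in> {1..<w ! i}" using v(2) i by auto
  then show "v \<in> (\<Union>(i, a)\<in>Sigma {..<length w} (\<lambda>i. {1..<w ! i}).
      {x \<in> words k (length w). agrees (take i w @ [a]) x \<and> bordered x})"
    using v i agrees_take_snoc[OF i(1) v(1)] by (intro UN_I[of "(i, v ! i)"]) (auto simp: words_def)
next
  fix v assume "v \<in> (\<Union>(i, a)\<in>Sigma {..<length w} (\<lambda>i. {1..<w ! i}).
      {x \<in> words k (length w). agrees (take i w @ [a]) x \<and> bordered x})"
  then obtain i a where ia: "i < length w" "a \<in> {1..<w ! i}" "v \<in> words k (length w)"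
    "agrees (take i w @ [a]) v" "bordered v" by auto
  then have "length v = length w" by (simp add: words_def)
  then have "take i v = take i w" "v ! i = a" using agrees_take_snoc[OF ia(1)] ia by auto
  then show "v \<in> {v. length v = length w \<and> word_over k v \<and> bordered v \<and> lex_less v w}"
    using ia \<open>length v = length w\<close>
    by (auto simp: words_def word_over_def lex_less_def lexord_take_index_conv)
qed

lemma agrees_take_snoc_unique:
  assumes "i < length w" "a < w ! i" "i' < length w" "a' < w ! i'" "length v = length w"
    and "agrees (take i w @ [a]) v" "agrees (take i' w @ [a']) v"
  shows "(i, a) = (i', a')"
proof -
  have v: "take i v = take i w" "v ! i = a" "take i' v = take i' w" "v ! i' = a'"
    using assms agrees_take_snoc[OF assms(1,5)] agrees_take_snoc[OF assms(3,5)] by auto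
  show ?thesis
  proof (cases i i' rule: linorder_cases)
    case less
    then have "v ! i = w ! i" using v(3) by (metis nth_take)
    then show ?thesis using v(2) assms(2) by simp
  next
    case greater
    then have "v ! i' = w ! i'" using v(1) by (metis nth_take)
    then show ?thesis using v(4) assms(4) by simp
  qed (use v in simp)
qed

theorem rankB_eq_sum:
  assumes "word_over k w"
  shows "rankB k w = 1 + (\<Sum>i<length w. \<Sum>a\<in>{1..<w ! i}. num_bordered k (take i w @ [a]) (length w))"
proof -
  let ?X = "\<lambda>(i, a). {x \<in> words k (length w). agrees (take i w @ [a]) x \<and> bordered x}"
  have "?X p \<inter> ?X q = {}"
    if "p \<in> Sigma {..<length w} (\<lambda>i. {1..<w ! i})" "q \<in> Sigma {..<length w} (\<lambda>i. {1..<w ! i})" "p \<noteq> q"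
    for p q
    using that agrees_take_snoc_unique[of "fst p" w "snd p" "fst q" "snd q"]
    by (fastforce simp: words_def)
  then have "card {v. length v = length w \<and> word_over k v \<and> bordered v \<and> lex_less v w}
      = (\<Sum>p\<in>Sigma {..<length w} (\<lambda>i. {1..<w ! i}). card (?X p))"
    unfolding bordered_below_eq_UN[OF assms]
    by (intro card_UN_disjoint) (use finite_words in auto)
  also have "\<dots> = (\<Sum>i<length w. \<Sum>a\<in>{1..<w ! i}. card (?X (i, a)))"
    by (subst sum.Sigma) (auto intro!: sum.cong)
  finally show ?thesis
    unfolding rankB_def num_bordered_def by simp
qed

section \<open>Structured programs on the RAM and their Hoare logic\<close>

datatype test = IsZero nat | IsNeg nat

fun holds :: "test \<Rightarrow> mem \<Rightarrow> bool" where
  "holds (IsZero x) m \<longleftrightarrow> m x = 0"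
| "holds (IsNeg x) m \<longleftrightarrow> m x < 0"

fun tested_cell :: "test \<Rightarrow> nat" where
  "tested_cell (IsZero x) = x"
| "tested_cell (IsNeg x) = x"

fun jump_if :: "test \<Rightarrow> nat \<Rightarrow> instr" where
  "jump_if (IsZero x) = Jz x"
| "jump_if (IsNeg x) = Jneg x"

lemma exec_jump_if: "exec (jump_if b l) pc m = (if holds b m then l else Suc pc, m)"
  by (cases b) auto

lemma accessed_jump_if: "accessed (jump_if b l) m = {tested_cell b}"
  by (cases b) auto

fun straight_line :: "instr \<Rightarrow> bool" where
  "straight_line (Jz i l) = False"
| "straight_line (Jneg i l) = False"
| "straight_line (Jmp l) = False"
| "straight_line _ = True"

lemma exec_straight_line: "straight_line i \<Longrightarrow> exec i pc m = (Suc pc, snd (exec i 0 m))"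
  by (cases i) auto

fun exec_block :: "instr list \<Rightarrow> mem \<Rightarrow> mem" where
  "exec_block [] m = m"
| "exec_block (i # is) m = exec_block is (snd (exec i 0 m))"

fun block_cells :: "instr list \<Rightarrow> mem \<Rightarrow> nat set" where
  "block_cells [] m = {}"
| "block_cells (i # is) m = accessed i m \<union> block_cells is (snd (exec i 0 m))"

lemma exec_block_append: "exec_block (xs @ ys) m = exec_block ys (exec_block xs m)"
  by (induction xs arbitrary: m) auto

lemma block_cells_append: "block_cells (xs @ ys) m = block_cells xs m \<union> block_cells ys (exec_block xs m)"
  by (induction xs arbitrary: m) auto

datatype com = Block "instr list" | Seq com com | Cond test com com | While nat com

fun code_length :: "com \<Rightarrow> nat" where
  "code_length (Block is) = length is"
| "code_length (Seq a b) = code_length a + code_length b"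
| "code_length (Cond b c d) = code_length c + code_length d + 2"
| "code_length (While x c) = code_length c + 2"

fun compile :: "nat \<Rightarrow> com \<Rightarrow> instr list" where
  "compile s (Block is) = is"
| "compile s (Seq a b) = compile s a @ compile (s + code_length a) b"
| "compile s (Cond b c d) = jump_if b (s + code_length d + 2) # compile (s + 1) d
     @ Jmp (s + code_length d + 2 + code_length c) # compile (s + code_length d + 2) c"
| "compile s (While x c) = Jz x (s + code_length c + 2) # compile (s + 1) c @ [Jmp s]"

lemma length_compile [simp]: "length (compile s c) = code_length c"
  by (induction c arbitrary: s) auto

text \<open>\<open>big_step c m t S m'\<close>: started in memory \<open>m\<close>, the code of \<open>c\<close> runs for \<open>t\<close> machine steps,
  accesses exactly the cells \<open>S\<close> and ends in memory \<open>m'\<close>.\<close>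
inductive big_step :: "com \<Rightarrow> mem \<Rightarrow> nat \<Rightarrow> nat set \<Rightarrow> mem \<Rightarrow> bool" where
  Block: "list_all straight_line is
      \<Longrightarrow> big_step (Block is) m (length is) (block_cells is m) (exec_block is m)"
| Seq: "big_step a m t1 S1 m1 \<Longrightarrow> big_step b m1 t2 S2 m2 \<Longrightarrow> big_step (Seq a b) m (t1 + t2) (S1 \<union> S2) m2"
| CondTrue: "holds b m \<Longrightarrow> big_step c m t S m' \<Longrightarrow>
    big_step (Cond b c d) m (1 + t) (insert (tested_cell b) S) m'"
| CondFalse: "\<not> holds b m \<Longrightarrow> big_step d m t S m' \<Longrightarrow>
    big_step (Cond b c d) m (1 + (t + 1)) (insert (tested_cell b) S) m'"
| WhileFalse: "m x = 0 \<Longrightarrow> big_step (While x c) m 1 {x} m"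
| WhileTrue: "m x \<noteq> 0 \<Longrightarrow> big_step c m t1 S1 m1 \<Longrightarrow> big_step (While x c) m1 t2 S2 m2 \<Longrightarrow>
    big_step (While x c) m (1 + (t1 + (1 + t2))) (insert x (S1 \<union> S2)) m2"

definition steps :: "instr list \<Rightarrow> nat \<Rightarrow> config \<Rightarrow> nat set \<Rightarrow> config \<Rightarrow> bool" where
  "steps P t cf S cf' \<longleftrightarrow> run P t cf = cf' \<and> used_cells P t cf = S"

lemma steps_0: "steps P 0 cf {} cf"
  by (simp add: steps_def run_def used_cells_def)

lemma steps_one:
  "pc < length P \<Longrightarrow> steps P 1 (pc, m) (accessed (P ! pc) m) (exec (P ! pc) pc m)"
  by (simp add: steps_def run_def used_cells_def step_def accessed_at_def lessThan_Suc)

lemma run_add: "run P (a + b) cf = run P b (run P a cf)"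
  unfolding run_def add.commute[of a b] funpow_add by simp

lemma used_cells_add: "used_cells P (a + b) cf = used_cells P a cf \<union> used_cells P b (run P a cf)"
proof (induction b)
  case (Suc b)
  have step: "used_cells P (Suc t) cf' = used_cells P t cf' \<union> accessed_at P (run P t cf')" for t cf'
    by (auto simp: used_cells_def lessThan_Suc)
  show ?case
    unfolding add_Suc_right step Suc.IH run_add by auto
qed (simp add: used_cells_def)

lemma steps_add:
  "steps P a cf S1 cf1 \<Longrightarrow> steps P b cf1 S2 cf2 \<Longrightarrow> steps P (a + b) cf (S1 \<union> S2) cf2"
  by (simp add: steps_def run_add used_cells_add)

definition code_at :: "instr list \<Rightarrow> nat \<Rightarrow> instr list \<Rightarrow> bool" where
  "code_at P s C \<longleftrightarrow> take (length C) (drop s P) = C"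

lemma code_at_append [simp]:
  "code_at P s (C1 @ C2) \<longleftrightarrow> code_at P s C1 \<and> code_at P (s + length C1) C2"
proof -
  let ?D = "drop s P"
  have split: "take (length C1 + length C2) ?D = take (length C1) ?D
      @ take (length C2) (drop (s + length C1) P)"
    by (simp add: take_add add.commute)
  show ?thesis
  proof (cases "length C1 \<le> length ?D")
    case True
    then show ?thesis using split by (simp add: code_at_def append_eq_append_conv)
  next
    case False
    then have "take (length C1 + length C2) ?D \<noteq> C1 @ C2" "take (length C1) ?D \<noteq> C1"
      using False by (auto dest: arg_cong[of _ _ length])
    then show ?thesis unfolding code_at_def by simp
  qed
qed

lemma code_at_Cons [simp]:
  "code_at P s (i # C) \<longleftrightarrow> s < length P \<and> P ! s = i \<and> code_at P (Suc s) C"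
proof (cases "s < length P")
  case True
  then have "drop s P = P ! s # drop (Suc s) P" by (rule Cons_nth_drop_Suc[symmetric])
  then show ?thesis unfolding code_at_def using True by auto
qed (simp add: code_at_def)

lemma steps_block:
  assumes "list_all straight_line is" "code_at P s is"
  shows "steps P (length is) (s, m) (block_cells is m) (s + length is, exec_block is m)"
  using assms
proof (induction "is" arbitrary: s m)
  case Nil
  then show ?case using steps_0 by simp
next
  case (Cons i "is")
  then have "steps P 1 (s, m) (accessed i m) (Suc s, snd (exec i 0 m))"
    using steps_one[of s P m] exec_straight_line[of i s m] by simp
  with Cons show ?case using steps_add by fastforce
qed

lemma big_step_steps:
  assumes "big_step c m t S m'" "code_at P s (compile s c)"
  shows "steps P t (s, m) S (s + code_length c, m')"
  using assms
proof (induction arbitrary: s rule: big_step.induct)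
  case (Block "is" m)
  then show ?case by (simp add: steps_block)
next
  case (Seq a m t1 S1 m1 b t2 S2 m2)
  then show ?case using steps_add by (fastforce simp: add.assoc)
next
  case (CondTrue b m c t S m' d)
  then have "steps P 1 (s, m) {tested_cell b} (s + code_length d + 2, m)"
    using steps_one[of s P m] by (simp add: exec_jump_if accessed_jump_if)
  moreover have "steps P t (s + code_length d + 2, m) S (s + code_length (Cond b c d), m')"
    using CondTrue.IH[of "s + code_length d + 2"] CondTrue.prems by (simp add: add_ac)
  ultimately show ?case using steps_add by fastforce
next
  case (CondFalse b m d t S m' c)
  then have "steps P 1 (s, m) {tested_cell b} (s + 1, m)"
    using steps_one[of s P m] by (simp add: exec_jump_if accessed_jump_if)
  moreover have "steps P t (s + 1, m) S (s + 1 + code_length d, m')"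
    using CondFalse.IH[of "s + 1"] CondFalse.prems by simp
  moreover have "steps P 1 (s + 1 + code_length d, m') {} (s + code_length (Cond b c d), m')"
    using CondFalse steps_one[of "s + 1 + code_length d" P m'] by (simp add: add_ac)
  ultimately have "steps P (1 + (t + 1)) (s, m) ({tested_cell b} \<union> (S \<union> {}))
      (s + code_length (Cond b c d), m')"
    by (blast intro: steps_add)
  then show ?case by simp
next
  case (WhileFalse m x c)
  then show ?case using steps_one[of s P m] by simp
next
  case (WhileTrue m x c t1 S1 m1 t2 S2 m2)
  then have "steps P 1 (s, m) {x} (s + 1, m)"
    using steps_one[of s P m] by simp
  moreover have "steps P t1 (s + 1, m) S1 (s + 1 + code_length c, m1)"
    using WhileTrue.IH(1)[of "s + 1"] WhileTrue.prems by simp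
  moreover have "steps P 1 (s + 1 + code_length c, m1) {} (s, m1)"
    using WhileTrue steps_one[of "s + 1 + code_length c" P m1] by simp
  moreover have "steps P t2 (s, m1) S2 (s + code_length (While x c), m2)"
    using WhileTrue by simp
  ultimately have "steps P (1 + (t1 + (1 + t2))) (s, m) ({x} \<union> (S1 \<union> ({} \<union> S2)))
      (s + code_length (While x c), m2)"
    by (blast intro: steps_add)
  then show ?case by (simp add: insert_commute)
qed

definition hoare :: "(mem \<Rightarrow> bool) \<Rightarrow> com \<Rightarrow> (mem \<Rightarrow> bool) \<Rightarrow> nat \<Rightarrow> nat set \<Rightarrow> bool" where
  "hoare P c Q T A \<longleftrightarrow> (\<forall>m. P m \<longrightarrow> (\<exists>t S m'. big_step c m t S m' \<and> Q m' \<and> t \<le> T \<and> S \<subseteq> A))"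

lemma hoare_conseq:
  assumes "hoare P c Q T A" "\<And>m. P' m \<Longrightarrow> P m" "\<And>m. Q m \<Longrightarrow> Q' m" "T \<le> T'"
  shows "hoare P' c Q' T' A"
  using assms unfolding hoare_def by (meson le_trans)

lemma hoare_Block:
  assumes "list_all straight_line is" "length is \<le> T"
    and "\<And>m. P m \<Longrightarrow> Q (exec_block is m) \<and> block_cells is m \<subseteq> A"
  shows "hoare P (Block is) Q T A"
  using assms big_step.Block unfolding hoare_def by blast

lemma hoare_Seq:
  assumes "hoare P a R T1 A" "hoare R b Q T2 A" "T1 + T2 \<le> T"
  shows "hoare P (Seq a b) Q T A"
  unfolding hoare_def
proof (intro allI impI)
  fix m assume "P m"
  then obtain t1 S1 m1 where 1: "big_step a m t1 S1 m1" "R m1" "t1 \<le> T1" "S1 \<subseteq> A"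
    using assms(1) unfolding hoare_def by blast
  then obtain t2 S2 m2 where 2: "big_step b m1 t2 S2 m2" "Q m2" "t2 \<le> T2" "S2 \<subseteq> A"
    using assms(2) unfolding hoare_def by blast
  show "\<exists>t S m'. big_step (Seq a b) m t S m' \<and> Q m' \<and> t \<le> T \<and> S \<subseteq> A"
    using big_step.Seq[OF 1(1) 2(1)] 1 2 assms(3)
    by (intro exI[of _ "t1 + t2"] exI[of _ "S1 \<union> S2"] exI[of _ m2]) auto
qed

lemma hoare_Cond:
  assumes "hoare (\<lambda>m. P m \<and> holds b m) c Q Tc A" "hoare (\<lambda>m. P m \<and> \<not> holds b m) d Q Td A"
    and "tested_cell b \<in> A" "max Tc Td + 2 \<le> T"
  shows "hoare P (Cond b c d) Q T A"
  unfolding hoare_def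
proof (intro allI impI)
  fix m assume "P m"
  show "\<exists>t S m'. big_step (Cond b c d) m t S m' \<and> Q m' \<and> t \<le> T \<and> S \<subseteq> A"
  proof (cases "holds b m")
    case True
    then obtain t S m' where "big_step c m t S m'" "Q m'" "t \<le> Tc" "S \<subseteq> A"
      using assms(1) \<open>P m\<close> unfolding hoare_def by blast
    then show ?thesis using CondTrue[OF True] assms(3,4) by fastforce
  next
    case False
    then obtain t S m' where "big_step d m t S m'" "Q m'" "t \<le> Td" "S \<subseteq> A"
      using assms(2) \<open>P m\<close> unfolding hoare_def by blast
    then show ?thesis using CondFalse[OF False] assms(3,4) by fastforce
  qed
qed

text \<open>A \<open>While\<close> loop used as a for-loop: cell \<open>x\<close> counts down the iterations that remain.\<close>
lemma hoare_For:
  assumes count: "\<And>j m. lo \<le> j \<Longrightarrow> j \<le> hi \<Longrightarrow> J j m \<Longrightarrow> m x = int (hi - j)"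
    and body: "\<And>j. lo \<le> j \<Longrightarrow> j < hi \<Longrightarrow> hoare (J j) c (J (Suc j)) T A"
    and "x \<in> A" "lo \<le> hi" "(hi - lo) * (T + 2) + 1 \<le> T'"
  shows "hoare (J lo) (While x c) (J hi) T' A"
proof -
  have "\<forall>m. J j m \<longrightarrow> (\<exists>t S m'. big_step (While x c) m t S m' \<and> J hi m'
      \<and> t \<le> (hi - j) * (T + 2) + 1 \<and> S \<subseteq> A)" if "lo \<le> j" "j \<le> hi" for j
    using \<open>j \<le> hi\<close> that(1)
  proof (induction j rule: inc_induct)
    case base
    then show ?case using count WhileFalse \<open>x \<in> A\<close> by fastforce
  next
    case (step j)
    show ?case
    proof (intro allI impI)
      fix m assume "J j m"
      then have "m x \<noteq> 0" using count[of j m] step by simp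
      obtain t1 S1 m1 where 1: "big_step c m t1 S1 m1" "J (Suc j) m1" "t1 \<le> T" "S1 \<subseteq> A"
        using body[of j] step \<open>J j m\<close> unfolding hoare_def by blast
      obtain t2 S2 m2 where 2: "big_step (While x c) m1 t2 S2 m2" "J hi m2"
          "t2 \<le> (hi - Suc j) * (T + 2) + 1" "S2 \<subseteq> A"
        using step 1(2) by auto
      have "hi - j = Suc (hi - Suc j)" using step by simp
      then have "(hi - Suc j) * (T + 2) + (T + 2) = (hi - j) * (T + 2)" by simp
      then have "1 + (t1 + (1 + t2)) \<le> (hi - j) * (T + 2) + 1" using 1(3) 2(3) by linarith
      then show "\<exists>t S m'. big_step (While x c) m t S m' \<and> J hi m' \<and> t \<le> (hi - j) * (T + 2) + 1 \<and> S \<subseteq> A"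
        using WhileTrue[OF \<open>m x \<noteq> 0\<close> 1(1) 2(1)] 1 2 \<open>x \<in> A\<close> by blast
    qed
  qed
  from this[OF order_refl \<open>lo \<le> hi\<close>] show ?thesis
    using assms(5) unfolding hoare_def by (meson le_trans)
qed

lemma hoare_compile:
  assumes "hoare P c Q T A" "P m"
  shows "\<exists>t\<le>T. halted (compile 0 c) (run (compile 0 c) t (0, m))
    \<and> Q (snd (run (compile 0 c) t (0, m))) \<and> used_cells (compile 0 c) t (0, m) \<subseteq> A"
proof -
  obtain t S m' where "big_step c m t S m'" "Q m'" "t \<le> T" "S \<subseteq> A"
    using assms unfolding hoare_def by blast
  moreover have "code_at (compile 0 c) 0 (compile 0 c)" by (simp add: code_at_def)
  ultimately show ?thesis
    using big_step_steps[of c m t S m' "compile 0 c" 0] by (auto simp: steps_def halted_def)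
qed

section \<open>The ranking program\<close>

declare nat_int_add [simp]

text \<open>The input occupies cells \<open>0..n + 1\<close> and cells \<open>0..25\<close> serve as registers, so
  the letters \<open>w ! t\<close>, \<open>t < 24\<close>, are first saved to the cells \<open>save_cell n k t\<close>, addressed through a
  pointer in cell 1 because no register is free yet. From \<open>w_base n k\<close> on lie four arrays of \<open>O(n)\<close>
  cells: \<open>W\<close> holds \<open>w\<close>, \<open>Pow\<close> holds \<open>k ^ e\<close> for \<open>e \<le> n\<close>, and while the candidate prefixes
  \<open>take i w @ [a]\<close>, \<open>a < w ! i\<close>, are processed, \<open>U[j]\<close> holds 1 iff \<open>take j w\<close> is unbordered for
  \<open>j \<le> i\<close> and \<open>num_unbordered k (take i w @ [a]) j\<close> for \<open>j > i\<close>, while \<open>Q[d]\<close> holds 1 iff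
  \<open>take i w\<close> does not have period \<open>d\<close>.

  Registers: 0 \<open>k\<close>, 1 \<open>n\<close>, 2--5 the bases of \<open>W\<close>, \<open>Pow\<close>, \<open>U\<close>, \<open>Q\<close>; 6 the position \<open>i\<close> (also the
  index of the copy and power loops), 8 \<open>w ! i\<close>, 9 the letter \<open>a\<close>, 11 \<open>i + 1\<close>, 12 the length \<open>L\<close>,
  14 the running sum for the bordered count, 15 the border length \<open>j\<close>, 17 the rank, 18 the
  border coefficient, 19 the period \<open>d\<close>; 7, 10, 13, 16, 20 count down the remaining iterations of
  the loops over \<open>i\<close>, \<open>a\<close>, \<open>L\<close>, \<open>j\<close>, \<open>d\<close>; 21--25 hold temporaries.\<close>

definition w_base :: "nat \<Rightarrow> nat \<Rightarrow> nat" where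
  "w_base n k = n + 49 * k"

definition pow_base :: "nat \<Rightarrow> nat \<Rightarrow> nat" where
  "pow_base n k = w_base n k + n"

definition u_base :: "nat \<Rightarrow> nat \<Rightarrow> nat" where
  "u_base n k = pow_base n k + n + 1"

definition q_base :: "nat \<Rightarrow> nat \<Rightarrow> nat" where
  "q_base n k = u_base n k + n + 1"

definition save_cell :: "nat \<Rightarrow> nat \<Rightarrow> nat \<Rightarrow> nat" where
  "save_cell n k t = n + (25 + t) * k"

definition cells :: "nat \<Rightarrow> nat \<Rightarrow> nat set" where
  "cells n k = {..<26} \<union> save_cell n k ` {..<24} \<union> {w_base n k ..< q_base n k + n + 1} \<union> {..<n + 2}"

definition save_letter :: "nat \<Rightarrow> instr list" where
  "save_letter t = [Add 1 1 0, StoreInd 1 (2 + t)]"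

definition set_bases :: "instr list" where
  "set_bases = [LoadConst 2 48, Mul 2 2 0, Sub 1 1 2, LoadConst 21 49, Mul 21 21 0, Add 2 1 21,
     Add 3 2 1, LoadConst 21 1, Add 4 3 1, Add 4 4 21, Add 5 4 1, Add 5 5 21]"

definition relocate :: "instr list" where
  "relocate = replicate 24 (Add 1 1 0) @ concat (map save_letter [0..<24]) @ set_bases"

definition copy_step :: com where
  "copy_step =
    Seq (Block [LoadConst 22 24, Sub 21 6 22])
      (Seq (Cond (IsNeg 21) (Block [LoadConst 22 25, Add 22 22 6, Mul 22 22 0,
          Add 22 1 22, LoadInd 23 22])
          (Block [LoadConst 22 2, Add 22 22 6, LoadInd 23 22]))
        (Block [Add 24 2 6, StoreInd 24 23, LoadConst 21 1, Add 6 6 21, Sub 7 7 21]))"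

definition power_step :: com where
  "power_step =
    Block [Add 21 3 6, LoadInd 22 21, Mul 22 22 0, LoadConst 23 1, Add 21 21 23,
        StoreInd 21 22, Add 6 6 23, Sub 7 7 23]"

definition period_test :: com where
  "period_test =
    Seq (Block [Add 24 5 21, LoadInd 24 24, Sub 25 6 21, Add 25 2 25, LoadInd 25 25, Sub 25 25 9])
      (Cond (IsZero 24) (Cond (IsZero 25) (Block [LoadConst 18 1]) (Block [LoadConst 18 0]))
        (Block [LoadConst 18 0]))"

definition coef_code :: com where
  "coef_code =
    Seq (Block [Sub 21 12 15, Sub 22 15 11])
      (Seq (Cond (IsNeg 22) (Block [Sub 23 21 11]) (Block [Sub 23 21 15]))
        (Cond (IsNeg 23) period_test (Block [Add 24 3 23, LoadInd 18 24])))"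

definition border_step :: com where
  "border_step = Seq coef_code
     (Block [Add 24 4 15, LoadInd 24 24, Mul 24 24 18, Add 14 14 24, LoadConst 21 1,
         Add 15 15 21, Sub 16 16 21])"

definition length_step :: com where
  "length_step =
    Seq (Block [LoadConst 14 0, LoadConst 15 1, LoadConst 21 2, Div 16 12 21])
      (Seq (While 16 border_step)
        (Block [Sub 21 12 11, Add 21 3 21, LoadInd 21 21, Sub 21 21 14, Add 22 4 12, StoreInd 22 21,
          LoadConst 21 1, Add 12 12 21, Sub 13 13 21]))"

definition letter_step :: com where
  "letter_step =
    Seq (Block [LoadConst 21 0, Add 12 11 21, Sub 13 1 6])
      (Seq (While 13 length_step) (Block [Add 17 17 14, LoadConst 21 1, Add 9 9 21, Sub 10 10 21]))"

definition period_step :: com where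
  "period_step =
    Seq (Block [Add 21 2 6, LoadInd 21 21, Sub 22 6 19, Add 22 2 22, LoadInd 22 22, Sub 21 21 22])
      (Seq (Cond (IsZero 21) (Block [LoadConst 23 0])
          (Block [Add 23 5 19, LoadConst 24 1, StoreInd 23 24]))
        (Block [LoadConst 21 1, Add 19 19 21, Sub 20 20 21]))"

definition prefix_step :: com where
  "prefix_step =
    Seq (Block [Add 21 2 6, LoadInd 8 21, LoadConst 9 1, LoadConst 21 0, Add 10 8 21,
        LoadConst 21 1, Add 11 6 21])
      (Seq (While 10 letter_step)
        (Seq (Block [Sub 17 17 14, LoadConst 19 1, LoadConst 21 0, Add 20 6 21])
          (Seq (While 20 period_step) (Block [LoadConst 21 1, Add 6 6 21, Sub 7 7 21]))))"

definition rank_program :: com where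
  "rank_program =
    Seq (Block relocate)
    (Seq (Block [LoadConst 6 0, LoadConst 21 0, Add 7 1 21]) (Seq (While 7 copy_step)
    (Seq (Block [LoadConst 21 1, StoreInd 3 21, LoadConst 6 0, LoadConst 21 0, Add 7 1 21])
    (Seq (While 7 power_step)
    (Seq (Block [LoadConst 6 0, LoadConst 21 0, Add 7 1 21, LoadConst 17 0]) (Seq (While 7 prefix_step)
      (Block [LoadConst 21 1, Add 0 17 21])))))))"

lemma exec_block_add_replicate: "exec_block (replicate r (Add 1 1 0)) m = m(1 := m 1 + int r * m 0)"
  by (induction r arbitrary: m) (simp_all add: algebra_simps)

lemma block_cells_add_replicate: "block_cells (replicate r (Add 1 1 0)) m \<subseteq> {0, 1}"
  by (induction r arbitrary: m) auto

lemma exec_save_letters: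
  assumes "m 0 = int k" "m 1 = int c" "1 \<le> k" "26 \<le> c" "r \<le> 24"
  defines "m' \<equiv> exec_block (concat (map save_letter [0..<r])) m"
  shows "m' 0 = int k" "m' 1 = int (c + r * k)" "\<And>t. t < r \<Longrightarrow> m' (c + (t + 1) * k) = m (2 + t)"
    "\<And>a. a \<noteq> 1 \<Longrightarrow> (\<forall>t<r. a \<noteq> c + (t + 1) * k) \<Longrightarrow> m' a = m a"
proof -
  have "m' 0 = int k \<and> m' 1 = int (c + r * k) \<and> (\<forall>t<r. m' (c + (t + 1) * k) = m (2 + t))
    \<and> (\<forall>a. a \<noteq> 1 \<longrightarrow> (\<forall>t<r. a \<noteq> c + (t + 1) * k) \<longrightarrow> m' a = m a)"
    unfolding m'_def using \<open>r \<le> 24\<close>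
  proof (induction r)
    case (Suc r)
    let ?m = "exec_block (concat (map save_letter [0..<r])) m"
    define A where "A = c + (r + 1) * k"
    from Suc have IH: "?m 0 = int k" "?m 1 = int (c + r * k)" "\<forall>t<r. ?m (c + (t + 1) * k) = m (2 + t)"
      "\<forall>a. a \<noteq> 1 \<longrightarrow> (\<forall>t<r. a \<noteq> c + (t + 1) * k) \<longrightarrow> ?m a = m a"
      by auto
    have "\<forall>t<r. 2 + r \<noteq> c + (t + 1) * k" using assms(3,4) Suc.prems by auto
    then have "?m (2 + r) = m (2 + r)" using IH(4) by simp
    moreover have "int c + int r * int k + int k = int A" by (simp add: A_def algebra_simps)
    then have "exec_block (save_letter r) ?m = ?m(1 := int A, A := ?m (2 + r))"
      using IH(1,2) by (simp add: save_letter_def)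
    moreover have "A \<noteq> 1" "\<forall>t<r. A \<noteq> c + (t + 1) * k" "\<forall>t<r. c + (t + 1) * k \<noteq> 1"
      using assms(3,4) by (auto simp: A_def)
    ultimately show ?case using IH assms(3,4)
      by (auto simp: exec_block_append less_Suc_eq A_def)
  qed (use assms(1,2) in simp)
  then show "m' 0 = int k" "m' 1 = int (c + r * k)" "\<And>t. t < r \<Longrightarrow> m' (c + (t + 1) * k) = m (2 + t)"
    "\<And>a. a \<noteq> 1 \<Longrightarrow> (\<forall>t<r. a \<noteq> c + (t + 1) * k) \<Longrightarrow> m' a = m a"
    by auto
qed

lemma block_cells_save_letters:
  assumes "m 0 = int k" "m 1 = int c" "1 \<le> k" "26 \<le> c" "r \<le> 24"
  shows "block_cells (concat (map save_letter [0..<r])) m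
    \<subseteq> {0, 1} \<union> (\<lambda>t. 2 + t) ` {..<r} \<union> (\<lambda>t. c + (t + 1) * k) ` {..<r}"
  using assms(5)
proof (induction r)
  case (Suc r)
  let ?m = "exec_block (concat (map save_letter [0..<r])) m"
  define A where "A = c + (r + 1) * k"
  have "?m 0 = int k" "?m 1 = int (c + r * k)"
    using exec_save_letters[OF assms(1-4)] Suc.prems by simp_all
  moreover have "int c + int r * int k + int k = int A" by (simp add: A_def algebra_simps)
  ultimately have last: "block_cells (save_letter r) ?m \<subseteq> {0, 1, 2 + r, A}"
    by (auto simp: save_letter_def)
  have IH: "block_cells (concat (map save_letter [0..<r])) m
      \<subseteq> {0, 1} \<union> (\<lambda>t. 2 + t) ` {..<r} \<union> (\<lambda>t. c + (t + 1) * k) ` {..<r}"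
    using Suc by simp
  have "block_cells (concat (map save_letter [0..<Suc r])) m
      = block_cells (concat (map save_letter [0..<r])) m \<union> block_cells (save_letter r) ?m"
    by (simp add: block_cells_append)
  also have "\<dots> \<subseteq> {0, 1} \<union> (\<lambda>t. 2 + t) ` {..<Suc r} \<union> (\<lambda>t. c + (t + 1) * k) ` {..<Suc r}"
    using IH last unfolding A_def lessThan_Suc by auto
  finally show ?case .
qed simp

section \<open>Correctness, running time and space\<close>

locale rank_instance =
  fixes k n :: nat and w :: "nat list"
  assumes n_pos: "1 \<le> n" and k_ge_2: "2 \<le> k" and length_w: "length w = n"
    and letters_w: "set w \<subseteq> {1..k}"
begin

abbreviation "bw \<equiv> w_base n k"
abbreviation "bp \<equiv> pow_base n k"
abbreviation "bu \<equiv> u_base n k"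
abbreviation "bq \<equiv> q_base n k"
abbreviation "cells_used \<equiv> cells n k"

lemma w_base_ge: "26 \<le> bw" "n + 2 \<le> bw"
  using k_ge_2 by (auto simp: w_base_def)

lemma bases_eq: "bp = bw + n" "bu = bw + 2 * n + 1" "bq = bw + 3 * n + 2"
  by (auto simp: pow_base_def u_base_def q_base_def)

lemma in_cells [simp]:
  "x < 26 \<Longrightarrow> x \<in> cells_used" "s < n \<Longrightarrow> bw + s \<in> cells_used" "e \<le> n \<Longrightarrow> bp + e \<in> cells_used"
  "e \<le> n \<Longrightarrow> bu + e \<in> cells_used" "e \<le> n \<Longrightarrow> bq + e \<in> cells_used"
  by (auto simp: cells_def bases_eq)

lemma register_ne_array [simp]:
  "x < 26 \<Longrightarrow> bw + s \<noteq> x" "x < 26 \<Longrightarrow> bp + s \<noteq> x" "x < 26 \<Longrightarrow> bu + s \<noteq> x" "x < 26 \<Longrightarrow> bq + s \<noteq> x"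
  "x < 26 \<Longrightarrow> x \<noteq> bw + s" "x < 26 \<Longrightarrow> x \<noteq> bp + s" "x < 26 \<Longrightarrow> x \<noteq> bu + s" "x < 26 \<Longrightarrow> x \<noteq> bq + s"
  using w_base_ge by (auto simp: bases_eq)

lemma letter_bounds: "i < n \<Longrightarrow> 1 \<le> w ! i \<and> w ! i \<le> k"
  using letters_w length_w nth_mem by fastforce

definition layout :: "mem \<Rightarrow> bool" where
  "layout m \<longleftrightarrow> m 0 = int k \<and> m 1 = int n \<and> m 2 = int bw \<and> m 3 = int bp \<and> m 4 = int bu \<and> m 5 = int bq"

definition word_stored :: "mem \<Rightarrow> bool" where
  "word_stored m \<longleftrightarrow> (\<forall>s<n. m (bw + s) = int (w ! s))"

definition powers_stored :: "mem \<Rightarrow> bool" where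
  "powers_stored m \<longleftrightarrow> (\<forall>e\<le>n. m (bp + e) = int (k ^ e))"

definition unbordered_flag :: "nat \<Rightarrow> nat" where
  "unbordered_flag j = (if bordered (take j w) then 0 else 1)"

definition unb_flags_stored :: "nat \<Rightarrow> mem \<Rightarrow> bool" where
  "unb_flags_stored i m \<longleftrightarrow> (\<forall>j. 1 \<le> j \<longrightarrow> j \<le> i \<longrightarrow> m (bu + j) = int (unbordered_flag j))"

definition nonperiod_flag :: "nat \<Rightarrow> nat \<Rightarrow> nat" where
  "nonperiod_flag i d = (if has_period (take i w) d then 0 else 1)"

definition periods_stored :: "nat \<Rightarrow> mem \<Rightarrow> bool" where
  "periods_stored i m \<longleftrightarrow> (\<forall>d. 1 \<le> d \<longrightarrow> d \<le> n \<longrightarrow> m (bq + d) = int (nonperiod_flag i d))"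

lemma layout_facts:
  assumes "layout m"
  shows "m 0 = int k" "m 1 = int n" "m 2 = int bw" "m 3 = int bp" "m 4 = int bu" "m 5 = int bq"
  using assms by (auto simp: layout_def)

lemma invariants_update_register [simp]:
  assumes "x < 26"
  shows "6 \<le> x \<Longrightarrow> layout (m(x := v)) = layout m" "word_stored (m(x := v)) = word_stored m"
    "powers_stored (m(x := v)) = powers_stored m"
    "unb_flags_stored i (m(x := v)) = unb_flags_stored i m" "periods_stored i (m(x := v)) = periods_stored i m"
  using assms
  by (simp_all add: layout_def word_stored_def powers_stored_def unb_flags_stored_def periods_stored_def)

abbreviation cand :: "nat \<Rightarrow> nat \<Rightarrow> nat list" where
  "cand i a \<equiv> take i w @ [a]"

lemma length_cand: "i < n \<Longrightarrow> length (cand i a) = i + 1"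
  using length_w by simp

lemma letters_cand: "i < n \<Longrightarrow> 1 \<le> a \<Longrightarrow> a \<le> k \<Longrightarrow> set (cand i a) \<subseteq> {1..k}"
  using letters_w by (auto dest: in_set_takeD)

lemma unbordered_flag_eq: "i < n \<Longrightarrow> 1 \<le> a \<Longrightarrow> a \<le> k \<Longrightarrow> j \<le> i \<Longrightarrow>
    unbordered_flag j = num_unbordered k (cand i a) j"
  using num_unbordered_short[of j "cand i a" k] length_cand letters_cand
  by (simp add: unbordered_flag_def)

definition rank_acc :: "nat \<Rightarrow> nat" where
  "rank_acc i = (\<Sum>i'<i. \<Sum>a\<in>{1..<w ! i'}. num_bordered k (cand i' a) n)"

definition rank_acc_upto :: "nat \<Rightarrow> nat \<Rightarrow> nat" where
  "rank_acc_upto i a = rank_acc i + (\<Sum>a'\<in>{1..<a}. num_bordered k (cand i a') n)"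

definition inv_letter :: "nat \<Rightarrow> nat \<Rightarrow> mem \<Rightarrow> bool" where
  "inv_letter i a m \<longleftrightarrow> layout m \<and> m 6 = int i \<and> m 7 = int (n - i) \<and> m 8 = int (w ! i) \<and> m 9 = int a
     \<and> m 10 = int (w ! i + 1 - a) \<and> m 11 = int (i + 1) \<and> m 17 = int (rank_acc_upto i a)
     \<and> word_stored m \<and> powers_stored m \<and> unb_flags_stored i m \<and> periods_stored i m"

definition unb_counts_stored :: "nat \<Rightarrow> nat \<Rightarrow> nat \<Rightarrow> mem \<Rightarrow> bool" where
  "unb_counts_stored i a L m \<longleftrightarrow>
    (\<forall>j. i + 1 \<le> j \<longrightarrow> j < L \<longrightarrow> m (bu + j) = int (num_unbordered k (cand i a) j))"

definition inv_length :: "nat \<Rightarrow> nat \<Rightarrow> nat \<Rightarrow> mem \<Rightarrow> bool" where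
  "inv_length i a L m \<longleftrightarrow> inv_letter i a m \<and> m 12 = int L \<and> m 13 = int (n + 1 - L)
    \<and> unb_counts_stored i a L m"

definition border_sum :: "nat \<Rightarrow> nat \<Rightarrow> nat \<Rightarrow> nat \<Rightarrow> nat" where
  "border_sum i a L j = (\<Sum>j'\<in>{1..<j}. num_unbordered k (cand i a) j' * border_coef k (cand i a) L j')"

definition inv_border :: "nat \<Rightarrow> nat \<Rightarrow> nat \<Rightarrow> nat \<Rightarrow> mem \<Rightarrow> bool" where
  "inv_border i a L j m \<longleftrightarrow> inv_length i a L m \<and> m 15 = int j \<and> m 16 = int (L div 2 + 1 - j)
     \<and> m 14 = int (border_sum i a L j)"

lemma unb_counts_stored_update_register [simp]:
  "x < 26 \<Longrightarrow> unb_counts_stored i a L (m(x := v)) = unb_counts_stored i a L m"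
  by (simp add: unb_counts_stored_def)

lemma inv_update_register [simp]:
  "12 \<le> x \<Longrightarrow> x < 26 \<Longrightarrow> x \<noteq> 17 \<Longrightarrow> inv_letter i a (m(x := v)) = inv_letter i a m"
  "14 \<le> x \<Longrightarrow> x < 26 \<Longrightarrow> x \<noteq> 17 \<Longrightarrow> inv_length i a L (m(x := v)) = inv_length i a L m"
  "18 \<le> x \<Longrightarrow> x < 26 \<Longrightarrow> inv_border i a L j (m(x := v)) = inv_border i a L j m"
  by (simp_all add: inv_letter_def inv_length_def inv_border_def)

lemma inv_border_facts:
  assumes "inv_border i a L j m"
  shows "layout m" "m 6 = int i" "m 9 = int a" "m 11 = int (i + 1)" "m 12 = int L"
    "m 14 = int (border_sum i a L j)" "m 15 = int j" "m 16 = int (L div 2 + 1 - j)"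
    "word_stored m" "powers_stored m" "unb_flags_stored i m" "periods_stored i m" "unb_counts_stored i a L m"
  using assms by (auto simp: inv_border_def inv_length_def inv_letter_def)

lemma period_test_correct:
  assumes i: "i < n" and L: "L \<le> n" and j: "1 \<le> j" "j \<le> L div 2" and overlap: "L - j < i + 1"
  shows "hoare (\<lambda>m. inv_border i a L j m \<and> m 21 = int (L - j)) period_test
    (\<lambda>m. inv_border i a L j m \<and> m 18 = int (border_coef k (cand i a) L j)) 11 cells_used"
proof -
  define d where "d = L - j"
  have d: "1 \<le> d" "d \<le> i" using j overlap by (auto simp: d_def)
  have coef: "border_coef k (cand i a) L j = (if nonperiod_flag i d = 0 \<and> a = w ! (i - d) then 1 else 0)"
    using has_period_snoc[of d "take i w" a] d i length_w overlap
    by (simp add: border_coef_def nonperiod_flag_def d_def)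
  define R where "R m \<longleftrightarrow> inv_border i a L j m \<and> m 24 = int (nonperiod_flag i d)
    \<and> m 25 = int (w ! (i - d)) - int a" for m
  have load: "hoare (\<lambda>m. inv_border i a L j m \<and> m 21 = int (L - j))
    (Block [Add 24 5 21, LoadInd 24 24, Sub 25 6 21, Add 25 2 25, LoadInd 25 25, Sub 25 25 9])
    R 6 cells_used"
  proof (rule hoare_Block)
    fix m assume h: "inv_border i a L j m \<and> m 21 = int (L - j)"
    note f = inv_border_facts[OF h[THEN conjunct1]]
    define s where "s = i - d"
    have s: "s < n" "int i - int d = int s" using d i by (auto simp: s_def)
    have "m 21 = int d" using h by (simp add: d_def)
    moreover have "m (bq + d) = int (nonperiod_flag i d)"
      using f(12) d i by (auto simp: periods_stored_def)
    moreover have "m (bw + s) = int (w ! s)" using f(9) s unfolding word_stored_def by blast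
    ultimately show "R (exec_block [Add 24 5 21, LoadInd 24 24, Sub 25 6 21, Add 25 2 25, LoadInd 25 25,
        Sub 25 25 9] m)
      \<and> block_cells [Add 24 5 21, LoadInd 24 24, Sub 25 6 21, Add 25 2 25, LoadInd 25 25, Sub 25 25 9] m
        \<subseteq> cells_used"
      using h f layout_facts[OF f(1)] d i s by (simp add: R_def s_def[symmetric])
  qed auto
  let ?Q = "\<lambda>m. inv_border i a L j m \<and> m 18 = int (border_coef k (cand i a) L j)"
  have test: "hoare R (Cond (IsZero 24) (Cond (IsZero 25) (Block [LoadConst 18 1]) (Block [LoadConst 18 0]))
      (Block [LoadConst 18 0])) ?Q 5 cells_used"
  proof (rule hoare_Cond[where Tc = 3 and Td = 1])
    show "hoare (\<lambda>m. R m \<and> holds (IsZero 24) m)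
      (Cond (IsZero 25) (Block [LoadConst 18 1]) (Block [LoadConst 18 0])) ?Q 3 cells_used"
      by (rule hoare_Cond[where Tc = 1 and Td = 1]; (rule hoare_Block)?) (auto simp: R_def coef)
  qed ((rule hoare_Block)?; auto simp: R_def coef nonperiod_flag_def)+
  show ?thesis unfolding period_test_def by (rule hoare_Seq[OF load test]) simp
qed

lemma power_lookup_correct:
  assumes i: "i < n" and L: "L \<le> n" and j: "j \<le> L div 2" and apart: "i + 1 \<le> L - j"
  shows "hoare (\<lambda>m. inv_border i a L j m \<and> m 23 = int (L - j - max j (i + 1))) (Block [Add 24 3 23, LoadInd 18 24])
    (\<lambda>m. inv_border i a L j m \<and> m 18 = int (border_coef k (cand i a) L j)) 2 cells_used"
proof (rule hoare_Block)
  fix m assume h: "inv_border i a L j m \<and> m 23 = int (L - j - max j (i + 1))"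
  note f = inv_border_facts[OF h[THEN conjunct1]]
  define e where "e = L - j - max j (i + 1)"
  have "m 23 = int e" "e \<le> n" using h L by (simp_all add: e_def)
  moreover have "m (bp + e) = int (k ^ e)" using f(10) L by (simp add: powers_stored_def e_def)
  moreover have "border_coef k (cand i a) L j = k ^ e" using apart i length_w
    by (simp add: border_coef_def e_def)
  ultimately show "(inv_border i a L j (exec_block [Add 24 3 23, LoadInd 18 24] m)
      \<and> exec_block [Add 24 3 23, LoadInd 18 24] m 18 = int (border_coef k (cand i a) L j))
    \<and> block_cells [Add 24 3 23, LoadInd 18 24] m \<subseteq> cells_used"
    using h[THEN conjunct1] layout_facts[OF f(1)] by simp
qed auto

lemma coef_code_correct:
  assumes i: "i < n" and L: "i + 1 \<le> L" "L \<le> n" and j: "1 \<le> j" "j \<le> L div 2"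
  shows "hoare (inv_border i a L j) coef_code
    (\<lambda>m. inv_border i a L j m \<and> m 18 = int (border_coef k (cand i a) L j)) 18 cells_used"
proof -
  define R1 where "R1 m \<longleftrightarrow> inv_border i a L j m \<and> m 21 = int L - int j \<and> m 22 = int j - int (i + 1)" for m
  define R2 where "R2 m \<longleftrightarrow> inv_border i a L j m \<and> m 21 = int L - int j
    \<and> m 23 = int L - int j - int (max j (i + 1))" for m
  let ?Q = "\<lambda>m. inv_border i a L j m \<and> m 18 = int (border_coef k (cand i a) L j)"
  have s1: "hoare (inv_border i a L j) (Block [Sub 21 12 15, Sub 22 15 11]) R1 2 cells_used"
  proof (rule hoare_Block)
    fix m assume "inv_border i a L j m"
    moreover from this have "m 11 = int (i + 1)" "m 12 = int L" "m 15 = int j"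
      by (auto simp: inv_border_facts)
    ultimately show "R1 (exec_block [Sub 21 12 15, Sub 22 15 11] m)
      \<and> block_cells [Sub 21 12 15, Sub 22 15 11] m \<subseteq> cells_used"
      by (simp add: R1_def)
  qed auto
  have s2: "hoare R1 (Cond (IsNeg 22) (Block [Sub 23 21 11]) (Block [Sub 23 21 15])) R2 3 cells_used"
  proof (rule hoare_Cond[where Tc = 1 and Td = 1]; (rule hoare_Block)?)
    fix m assume "R1 m \<and> holds (IsNeg 22) m"
    moreover from this have "m 11 = int (i + 1)" "m 15 = int j" by (auto simp: R1_def inv_border_facts)
    ultimately show "R2 (exec_block [Sub 23 21 11] m) \<and> block_cells [Sub 23 21 11] m \<subseteq> cells_used"
      by (simp add: R1_def R2_def max_def)
  next
    fix m assume "R1 m \<and> \<not> holds (IsNeg 22) m"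
    moreover from this have "m 11 = int (i + 1)" "m 15 = int j" by (auto simp: R1_def inv_border_facts)
    ultimately show "R2 (exec_block [Sub 23 21 15] m) \<and> block_cells [Sub 23 21 15] m \<subseteq> cells_used"
      by (simp add: R1_def R2_def max_def)
  qed auto
  have s3: "hoare R2 (Cond (IsNeg 23) period_test (Block [Add 24 3 23, LoadInd 18 24])) ?Q 13 cells_used"
  proof (cases "L - j < i + 1")
    case True
    have "hoare (\<lambda>m. R2 m \<and> holds (IsNeg 23) m) period_test ?Q 11 cells_used"
      by (rule hoare_conseq[OF period_test_correct[OF i L(2) j True]]) (use j in \<open>auto simp: R2_def\<close>)
    moreover have "hoare (\<lambda>m. R2 m \<and> \<not> holds (IsNeg 23) m) (Block [Add 24 3 23, LoadInd 18 24]) ?Q 2 cells_used"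
      using True j by (auto simp: hoare_def R2_def)
    ultimately show ?thesis by (rule hoare_Cond) simp_all
  next
    case False
    have "hoare (\<lambda>m. R2 m \<and> holds (IsNeg 23) m) period_test ?Q 11 cells_used"
      using False j by (auto simp: hoare_def R2_def)
    moreover have "hoare (\<lambda>m. R2 m \<and> \<not> holds (IsNeg 23) m) (Block [Add 24 3 23, LoadInd 18 24]) ?Q 2 cells_used"
      by (rule hoare_conseq[OF power_lookup_correct[OF i L(2) j(2)]]) (use False j in \<open>auto simp: R2_def\<close>)
    ultimately show ?thesis by (rule hoare_Cond) simp_all
  qed
  show ?thesis unfolding coef_code_def
    by (rule hoare_Seq[OF s1 hoare_Seq[OF s2 s3 order_refl]]) simp
qed

lemma border_step_correct:
  assumes i: "i < n" and a: "1 \<le> a" "a \<le> w ! i" and L: "i + 1 \<le> L" "L \<le> n"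
    and j: "1 \<le> j" "j \<le> L div 2"
  shows "hoare (inv_border i a L j) border_step (inv_border i a L (j + 1)) 25 cells_used"
  unfolding border_step_def
proof (rule hoare_Seq[OF coef_code_correct[OF i L j]])
  show "hoare (\<lambda>m. inv_border i a L j m \<and> m 18 = int (border_coef k (cand i a) L j))
    (Block [Add 24 4 15, LoadInd 24 24, Mul 24 24 18, Add 14 14 24, LoadConst 21 1,
        Add 15 15 21, Sub 16 16 21])
    (inv_border i a L (j + 1)) 7 cells_used"
  proof (rule hoare_Block)
    fix m assume h: "inv_border i a L j m \<and> m 18 = int (border_coef k (cand i a) L j)"
    note f = inv_border_facts[OF h[THEN conjunct1]]
    have "j < L" "j \<le> n" using j L by auto
    have "m (bu + j) = int (num_unbordered k (cand i a) j)"
    proof (cases "j \<le> i")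
      case True
      then show ?thesis
        using f(11) j unbordered_flag_eq[OF i a(1) _ True] a letter_bounds[OF i]
        by (simp add: unb_flags_stored_def)
    next
      case False
      then show ?thesis using f(13) \<open>j < L\<close> by (simp add: unb_counts_stored_def)
    qed
    moreover have "border_sum i a L (j + 1)
        = border_sum i a L j + num_unbordered k (cand i a) j * border_coef k (cand i a) L j"
      using j by (simp add: border_sum_def)
    moreover have "inv_length i a L m" using h by (simp add: inv_border_def)
    ultimately show "inv_border i a L (j + 1) (exec_block [Add 24 4 15, LoadInd 24 24, Mul 24 24 18,
        Add 14 14 24, LoadConst 21 1, Add 15 15 21, Sub 16 16 21] m)
      \<and> block_cells [Add 24 4 15, LoadInd 24 24, Mul 24 24 18, Add 14 14 24, LoadConst 21 1,
        Add 15 15 21, Sub 16 16 21] m \<subseteq> cells_used"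
      using h f layout_facts[OF f(1)] j \<open>j \<le> n\<close> by (simp add: inv_border_def of_nat_diff)
  qed auto
qed simp

lemma invariants_update_array [simp]:
  "layout (m(bw + s := v)) = layout m" "layout (m(bp + s := v)) = layout m"
  "layout (m(bu + s := v)) = layout m" "layout (m(bq + s := v)) = layout m"
  "word_stored (m(bp + e := v)) = word_stored m" "word_stored (m(bu + e := v)) = word_stored m"
  "word_stored (m(bq + e := v)) = word_stored m"
  "s < n \<Longrightarrow> powers_stored (m(bw + s := v)) = powers_stored m"
  "powers_stored (m(bu + e := v)) = powers_stored m" "powers_stored (m(bq + e := v)) = powers_stored m"
  "s < n \<Longrightarrow> unb_flags_stored i (m(bw + s := v)) = unb_flags_stored i m"
  "e \<le> n \<Longrightarrow> unb_flags_stored i (m(bp + e := v)) = unb_flags_stored i m"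
  "i \<le> n \<Longrightarrow> unb_flags_stored i (m(bq + e := v)) = unb_flags_stored i m"
  "i < e \<Longrightarrow> unb_flags_stored i (m(bu + e := v)) = unb_flags_stored i m"
  "s < n \<Longrightarrow> periods_stored i (m(bw + s := v)) = periods_stored i m"
  "e \<le> n \<Longrightarrow> periods_stored i (m(bp + e := v)) = periods_stored i m"
  "e \<le> n \<Longrightarrow> periods_stored i (m(bu + e := v)) = periods_stored i m"
  "s < n \<Longrightarrow> unb_counts_stored i a L (m(bw + s := v)) = unb_counts_stored i a L m"
  "e \<le> n \<Longrightarrow> unb_counts_stored i a L (m(bp + e := v)) = unb_counts_stored i a L m"
  "L \<le> n + 1 \<Longrightarrow> unb_counts_stored i a L (m(bq + e := v)) = unb_counts_stored i a L m"
  using w_base_ge by (auto simp: layout_def word_stored_def powers_stored_def unb_flags_stored_def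
    periods_stored_def unb_counts_stored_def bases_eq)

lemma inv_letter_update_U: "i < L \<Longrightarrow> L \<le> n \<Longrightarrow> inv_letter i a (m(bu + L := v)) = inv_letter i a m"
  by (simp add: inv_letter_def)

lemma border_loop_correct:
  assumes i: "i < n" and a: "1 \<le> a" "a \<le> w ! i" and L: "i + 1 \<le> L" "L \<le> n"
  shows "hoare (inv_border i a L 1) (While 16 border_step) (inv_border i a L (L div 2 + 1))
      (n * 27 + 1) cells_used"
proof (rule hoare_For)
  fix j m assume "inv_border i a L j m"
  then show "m 16 = int (L div 2 + 1 - j)" by (simp add: inv_border_def)
next
  fix j assume "1 \<le> j" "j < L div 2 + 1"
  then show "hoare (inv_border i a L j) border_step (inv_border i a L (Suc j)) 25 cells_used"
    using border_step_correct[OF i a L, of j] by simp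
next
  show "(L div 2 + 1 - 1) * (25 + 2) + 1 \<le> n * 27 + 1" using L by simp
qed simp_all

definition inv_length_loop :: "nat \<Rightarrow> nat \<Rightarrow> nat \<Rightarrow> mem \<Rightarrow> bool" where
  "inv_length_loop i a L m \<longleftrightarrow> inv_length i a L m
     \<and> (i + 1 < L \<longrightarrow> m 14 = int (num_bordered k (cand i a) (L - 1)))"

lemma border_sum_complete:
  assumes i: "i < n" and a: "1 \<le> a" "a \<le> w ! i" and L: "i + 1 \<le> L"
  shows "border_sum i a L (L div 2 + 1) = num_bordered k (cand i a) L"
    and "int (k ^ (L - (i + 1))) - int (num_bordered k (cand i a) L) = int (num_unbordered k (cand i a) L)"
proof -
  have p: "length (cand i a) \<le> L" "set (cand i a) \<subseteq> {1..k}"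
    using length_cand[OF i] letters_cand[OF i a(1)] a letter_bounds[OF i] L by auto
  show "border_sum i a L (L div 2 + 1) = num_bordered k (cand i a) L"
    unfolding border_sum_def num_bordered_eq_sum[OF p] by (rule sum.cong) auto
  have "num_bordered k (cand i a) L + num_unbordered k (cand i a) L = k ^ (L - (i + 1))"
    using num_bordered_add_num_unbordered[OF p(2)] length_cand[OF i] by simp
  then show "int (k ^ (L - (i + 1))) - int (num_bordered k (cand i a) L) = int (num_unbordered k (cand i a) L)"
    by linarith
qed

text \<open>Once the bordered count \<open>B\<close> of the candidate for length \<open>L\<close> is known, the unbordered
  count \<open>k ^ (L - |cand|) - B\<close> is stored in the array \<open>U\<close> for the longer lengths.\<close>
lemma length_step_correct:
  assumes i: "i < n" and a: "1 \<le> a" "a \<le> w ! i" and L: "i + 1 \<le> L" "L \<le> n"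
  shows "hoare (inv_length_loop i a L) length_step (inv_length_loop i a (L + 1))
      (n * 27 + 14) cells_used"
proof -
  have s1: "hoare (inv_length_loop i a L) (Block [LoadConst 14 0, LoadConst 15 1, LoadConst 21 2, Div 16 12 21])
      (inv_border i a L 1) 4 cells_used"
  proof (rule hoare_Block)
    fix m assume "inv_length_loop i a L m"
    then have "inv_length i a L m" "m 12 = int L" by (auto simp: inv_length_loop_def inv_length_def)
    moreover have "int L div 2 = int (L div 2)" by (simp add: zdiv_int)
    ultimately show "inv_border i a L 1 (exec_block [LoadConst 14 0, LoadConst 15 1, LoadConst 21 2, Div 16 12 21] m)
      \<and> block_cells [LoadConst 14 0, LoadConst 15 1, LoadConst 21 2, Div 16 12 21] m \<subseteq> cells_used"
      by (simp add: inv_border_def border_sum_def)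
  qed auto
  have s3: "hoare (inv_border i a L (L div 2 + 1))
      (Block [Sub 21 12 11, Add 21 3 21, LoadInd 21 21, Sub 21 21 14, Add 22 4 12, StoreInd 22 21,
        LoadConst 21 1, Add 12 12 21, Sub 13 13 21]) (inv_length_loop i a (L + 1)) 9 cells_used"
  proof (rule hoare_Block)
    fix m assume h: "inv_border i a L (L div 2 + 1) m"
    note f = inv_border_facts[OF h]
    have len: "inv_length i a L m" using h by (simp add: inv_border_def)
    then have "inv_letter i a m" "m 13 = int (n + 1 - L)" by (auto simp: inv_length_def)
    define e where "e = L - (i + 1)"
    have e: "int L - (1 + int i) = int e" "e \<le> n" using L by (auto simp: e_def)
    have "m (bp + e) = int (k ^ e)" using f(10) e by (simp add: powers_stored_def)
    note border_sum_complete[OF i a L(1), folded e_def]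
    moreover have "unb_counts_stored i a (L + 1)
        (m(22 := v, bu + L := int (num_unbordered k (cand i a) L)))" for v
      using len by (auto simp: inv_length_def unb_counts_stored_def)
    ultimately show "inv_length_loop i a (L + 1) (exec_block [Sub 21 12 11, Add 21 3 21, LoadInd 21 21,
        Sub 21 21 14, Add 22 4 12, StoreInd 22 21, LoadConst 21 1, Add 12 12 21, Sub 13 13 21] m)
      \<and> block_cells [Sub 21 12 11, Add 21 3 21, LoadInd 21 21, Sub 21 21 14, Add 22 4 12, StoreInd 22 21,
        LoadConst 21 1, Add 12 12 21, Sub 13 13 21] m \<subseteq> cells_used"
      using f layout_facts[OF f(1)] e \<open>m (bp + e) = int (k ^ e)\<close> \<open>inv_letter i a m\<close>
        \<open>m 13 = int (n + 1 - L)\<close> L i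
      by (simp add: inv_length_loop_def inv_length_def inv_letter_update_U of_nat_diff)
  qed auto
  show ?thesis unfolding length_step_def
    by (rule hoare_Seq[OF s1 hoare_Seq[OF border_loop_correct[OF i a L] s3 order_refl]]) simp
qed

lemma length_loop_correct:
  assumes i: "i < n" and a: "1 \<le> a" "a \<le> w ! i"
  shows "hoare (inv_length_loop i a (i + 1)) (While 13 length_step) (inv_length_loop i a (n + 1))
    (n * (n * 27 + 16) + 1) cells_used"
proof (rule hoare_For)
  fix L m assume "inv_length_loop i a L m"
  then show "m 13 = int (n + 1 - L)" by (simp add: inv_length_loop_def inv_length_def)
next
  fix L assume "i + 1 \<le> L" "L < n + 1"
  then show "hoare (inv_length_loop i a L) length_step (inv_length_loop i a (Suc L))
      (n * 27 + 14) cells_used"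
    using length_step_correct[OF i a, of L] by simp
next
  have "n + 1 - (i + 1) \<le> n" by simp
  then have "(n + 1 - (i + 1)) * (n * 27 + 16) \<le> n * (n * 27 + 16)" by (rule mult_le_mono1)
  then show "(n + 1 - (i + 1)) * (n * 27 + 14 + 2) + 1 \<le> n * (n * 27 + 16) + 1" by (simp add: ac_simps)
qed (use i in simp_all)

definition inv_letter_loop :: "nat \<Rightarrow> nat \<Rightarrow> mem \<Rightarrow> bool" where
  "inv_letter_loop i a m \<longleftrightarrow> inv_letter i a m \<and> (2 \<le> a \<longrightarrow>
     m (bu + (i + 1)) = int (num_unbordered k (cand i (a - 1)) (i + 1))
     \<and> m 14 = int (num_bordered k (cand i (a - 1)) n))"

lemma letter_step_correct:
  assumes i: "i < n" and a: "1 \<le> a" "a \<le> w ! i"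
  shows "hoare (inv_letter_loop i a) letter_step (inv_letter_loop i (a + 1))
      (n * (n * 27 + 16) + 8) cells_used"
proof -
  have s1: "hoare (inv_letter_loop i a) (Block [LoadConst 21 0, Add 12 11 21, Sub 13 1 6])
      (inv_length_loop i a (i + 1)) 3 cells_used"
  proof (rule hoare_Block)
    fix m assume "inv_letter_loop i a m"
    then have "inv_letter i a m" "layout m" "m 6 = int i" "m 11 = int (i + 1)"
      by (auto simp: inv_letter_loop_def inv_letter_def)
    then show "inv_length_loop i a (i + 1) (exec_block [LoadConst 21 0, Add 12 11 21, Sub 13 1 6] m)
      \<and> block_cells [LoadConst 21 0, Add 12 11 21, Sub 13 1 6] m \<subseteq> cells_used"
      using i by (simp add: inv_length_loop_def inv_length_def unb_counts_stored_def layout_def of_nat_diff)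
  qed auto
  have s3: "hoare (inv_length_loop i a (n + 1)) (Block [Add 17 17 14, LoadConst 21 1, Add 9 9 21, Sub 10 10 21])
      (inv_letter_loop i (a + 1)) 4 cells_used"
  proof (rule hoare_Block)
    fix m assume "inv_length_loop i a (n + 1) m"
    then have "inv_letter i a m" "m (bu + (i + 1)) = int (num_unbordered k (cand i a) (i + 1))"
      "m 14 = int (num_bordered k (cand i a) n)"
      using i by (auto simp: inv_length_loop_def inv_length_def unb_counts_stored_def)
    moreover have "rank_acc_upto i (a + 1) = rank_acc_upto i a + num_bordered k (cand i a) n"
      using a by (simp add: rank_acc_upto_def)
    ultimately show "inv_letter_loop i (a + 1) (exec_block [Add 17 17 14, LoadConst 21 1, Add 9 9 21, Sub 10 10 21] m)
      \<and> block_cells [Add 17 17 14, LoadConst 21 1, Add 9 9 21, Sub 10 10 21] m \<subseteq> cells_used"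
      using a by (simp add: inv_letter_loop_def inv_letter_def of_nat_diff)
  qed auto
  show ?thesis unfolding letter_step_def
    by (rule hoare_Seq[OF s1 hoare_Seq[OF length_loop_correct[OF i a] s3 order_refl]]) simp
qed

lemma letter_loop_correct:
  assumes i: "i < n"
  shows "hoare (inv_letter_loop i 1) (While 10 letter_step) (inv_letter_loop i (w ! i + 1))
    (k * (n * (n * 27 + 16) + 10) + 1) cells_used"
proof (rule hoare_For)
  fix a m assume "inv_letter_loop i a m"
  then show "m 10 = int (w ! i + 1 - a)" by (simp add: inv_letter_loop_def inv_letter_def)
next
  fix a assume "1 \<le> a" "a < w ! i + 1"
  then show "hoare (inv_letter_loop i a) letter_step (inv_letter_loop i (Suc a))
      (n * (n * 27 + 16) + 8) cells_used"
    using letter_step_correct[OF i, of a] by simp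
next
  have "w ! i + 1 - 1 \<le> k" using letter_bounds[OF i] by simp
  then have "(w ! i + 1 - 1) * (n * (n * 27 + 16) + 10) \<le> k * (n * (n * 27 + 16) + 10)"
    by (rule mult_le_mono1)
  then show "(w ! i + 1 - 1) * (n * (n * 27 + 16) + 8 + 2) + 1 \<le> k * (n * (n * 27 + 16) + 10) + 1"
    by (simp add: ac_simps)
qed simp_all

lemma nonperiod_flag_Suc:
  assumes "i < n" "1 \<le> d" "d \<le> i"
  shows "nonperiod_flag (i + 1) d = (if w ! i = w ! (i - d) then nonperiod_flag i d else 1)"
proof -
  have "take (i + 1) w = take i w @ [w ! i]" using assms length_w by (simp add: take_Suc_conv_app_nth)
  then show ?thesis
    using has_period_snoc[of d "take i w" "w ! i"] assms length_w by (auto simp: nonperiod_flag_def)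
qed

definition periods_updating :: "nat \<Rightarrow> nat \<Rightarrow> mem \<Rightarrow> bool" where
  "periods_updating i d m \<longleftrightarrow>
     (\<forall>d'. 1 \<le> d' \<longrightarrow> d' \<le> n \<longrightarrow> m (bq + d') = int (nonperiod_flag (if d' < d then i + 1 else i) d'))"

definition inv_period_core :: "nat \<Rightarrow> nat \<Rightarrow> mem \<Rightarrow> bool" where
  "inv_period_core i d m \<longleftrightarrow> layout m \<and> m 6 = int i \<and> m 7 = int (n - i) \<and> m 17 = int (rank_acc (i + 1))
     \<and> word_stored m \<and> powers_stored m \<and> unb_flags_stored (i + 1) m \<and> periods_updating i d m"

definition inv_period :: "nat \<Rightarrow> nat \<Rightarrow> mem \<Rightarrow> bool" where
  "inv_period i d m \<longleftrightarrow> inv_period_core i d m \<and> m 19 = int d \<and> m 20 = int (i + 1 - d)"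

lemma periods_updating_update_register [simp]:
  "x < 26 \<Longrightarrow> periods_updating i d (m(x := v)) = periods_updating i d m"
  by (simp add: periods_updating_def)

lemma inv_period_core_update_register [simp]:
  "18 \<le> x \<Longrightarrow> x < 26 \<Longrightarrow> inv_period_core i d (m(x := v)) = inv_period_core i d m"
  by (simp add: inv_period_core_def)

lemma periods_updating_Suc:
  "periods_updating i d m \<Longrightarrow> periods_updating i (d + 1) (m(bq + d := int (nonperiod_flag (i + 1) d)))"
  by (auto simp: periods_updating_def)

lemma period_update_correct:
  assumes i: "i < n" and d: "1 \<le> d" "d \<le> i"
  shows "hoare (\<lambda>m. inv_period i d m \<and> m 21 = int (w ! i) - int (w ! (i - d)))
    (Cond (IsZero 21) (Block [LoadConst 23 0]) (Block [Add 23 5 19, LoadConst 24 1, StoreInd 23 24]))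
    (\<lambda>m. inv_period_core i (d + 1) m \<and> m 19 = int d \<and> m 20 = int (i + 1 - d)) 5 cells_used"
proof (rule hoare_Cond[where Tc = 1 and Td = 3]; (rule hoare_Block)?)
  fix m assume h: "(inv_period i d m \<and> m 21 = int (w ! i) - int (w ! (i - d))) \<and> holds (IsZero 21) m"
  then have core: "inv_period_core i d m" and "w ! i = w ! (i - d)" by (auto simp: inv_period_def)
  then have "m (bq + d) = int (nonperiod_flag (i + 1) d)"
    using nonperiod_flag_Suc[OF i d] d i by (auto simp: inv_period_core_def periods_updating_def)
  then have "inv_period_core i (d + 1) m"
    using core periods_updating_Suc[of i d m] by (simp add: inv_period_core_def fun_upd_idem)
  then show "(inv_period_core i (d + 1) (exec_block [LoadConst 23 0] m)
      \<and> exec_block [LoadConst 23 0] m 19 = int d \<and> exec_block [LoadConst 23 0] m 20 = int (i + 1 - d))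
    \<and> block_cells [LoadConst 23 0] m \<subseteq> cells_used"
    using h by (simp add: inv_period_def)
next
  fix m assume "(inv_period i d m \<and> m 21 = int (w ! i) - int (w ! (i - d))) \<and> \<not> holds (IsZero 21) m"
  then have f: "inv_period_core i d m" "w ! i \<noteq> w ! (i - d)" "m 19 = int d" "m 20 = int (i + 1 - d)"
    by (auto simp: inv_period_def)
  then have "layout m" by (simp add: inv_period_core_def)
  have "inv_period_core i (d + 1) (m(23 := u, 24 := v, bq + d := 1))" for u v
    using f periods_updating_Suc[of i d "m(23 := u, 24 := v)"] nonperiod_flag_Suc[OF i d] i d
    by (simp add: inv_period_core_def)
  then show "(inv_period_core i (d + 1) (exec_block [Add 23 5 19, LoadConst 24 1, StoreInd 23 24] m)
      \<and> exec_block [Add 23 5 19, LoadConst 24 1, StoreInd 23 24] m 19 = int d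
      \<and> exec_block [Add 23 5 19, LoadConst 24 1, StoreInd 23 24] m 20 = int (i + 1 - d))
    \<and> block_cells [Add 23 5 19, LoadConst 24 1, StoreInd 23 24] m \<subseteq> cells_used"
    using f layout_facts[OF \<open>layout m\<close>] d i by simp
qed auto

lemma period_step_correct:
  assumes i: "i < n" and d: "1 \<le> d" "d \<le> i"
  shows "hoare (inv_period i d) period_step (inv_period i (d + 1)) 14 cells_used"
proof -
  have s1: "hoare (inv_period i d)
      (Block [Add 21 2 6, LoadInd 21 21, Sub 22 6 19, Add 22 2 22, LoadInd 22 22, Sub 21 21 22])
      (\<lambda>m. inv_period i d m \<and> m 21 = int (w ! i) - int (w ! (i - d))) 6 cells_used"
  proof (rule hoare_Block)
    fix m assume h: "inv_period i d m"
    then have f: "layout m" "m 6 = int i" "m 19 = int d" "word_stored m"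
      by (auto simp: inv_period_def inv_period_core_def)
    define s where "s = i - d"
    have s: "s < n" "int i - int d = int s" using d i by (auto simp: s_def)
    have "m (bw + s) = int (w ! s)" "m (bw + i) = int (w ! i)"
      using f(4) s i unfolding word_stored_def by blast+
    then show "(inv_period i d (exec_block [Add 21 2 6, LoadInd 21 21, Sub 22 6 19, Add 22 2 22,
          LoadInd 22 22, Sub 21 21 22] m)
        \<and> exec_block [Add 21 2 6, LoadInd 21 21, Sub 22 6 19, Add 22 2 22, LoadInd 22 22, Sub 21 21 22] m 21
          = int (w ! i) - int (w ! (i - d)))
      \<and> block_cells [Add 21 2 6, LoadInd 21 21, Sub 22 6 19, Add 22 2 22, LoadInd 22 22,
        Sub 21 21 22] m \<subseteq> cells_used"
      using h f layout_facts[OF f(1)] s i by (simp add: inv_period_def s_def[symmetric])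
  qed auto
  have s3: "hoare (\<lambda>m. inv_period_core i (d + 1) m \<and> m 19 = int d \<and> m 20 = int (i + 1 - d))
      (Block [LoadConst 21 1, Add 19 19 21, Sub 20 20 21]) (inv_period i (d + 1)) 3 cells_used"
    by (rule hoare_Block) (use d in \<open>auto simp: inv_period_def of_nat_diff\<close>)
  show ?thesis unfolding period_step_def
    by (rule hoare_Seq[OF s1 hoare_Seq[OF period_update_correct[OF i d] s3 order_refl]]) simp
qed

lemma period_loop_correct:
  assumes i: "i < n"
  shows "hoare (inv_period i 1) (While 20 period_step) (inv_period i (i + 1)) (n * 16 + 1) cells_used"
proof (rule hoare_For)
  fix d m assume "inv_period i d m"
  then show "m 20 = int (i + 1 - d)" by (simp add: inv_period_def)
next
  fix d assume "1 \<le> d" "d < i + 1"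
  then show "hoare (inv_period i d) period_step (inv_period i (Suc d)) 14 cells_used"
    using period_step_correct[OF i, of d] by simp
qed (use i in simp_all)

definition inv_prefix :: "nat \<Rightarrow> mem \<Rightarrow> bool" where
  "inv_prefix i m \<longleftrightarrow> layout m \<and> m 6 = int i \<and> m 7 = int (n - i) \<and> m 17 = int (rank_acc i)
     \<and> word_stored m \<and> powers_stored m \<and> unb_flags_stored i m \<and> periods_stored i m"

text \<open>The letter loop also runs for \<open>a = w ! i\<close> itself, where the candidate is the prefix of \<open>w\<close>
  of length \<open>i + 1\<close>: that pass only serves to store its unbordered flag in \<open>U\<close>, so its count is
  subtracted from the rank again.\<close>
lemma letters_done_correct:
  assumes i: "i < n"
  shows "hoare (inv_letter_loop i (w ! i + 1)) (Block [Sub 17 17 14, LoadConst 19 1, LoadConst 21 0, Add 20 6 21])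
    (inv_period i 1) 4 cells_used"
proof (rule hoare_Block)
  have wi: "1 \<le> w ! i" "w ! i \<le> k" using letter_bounds[OF i] by simp_all
  fix m assume "inv_letter_loop i (w ! i + 1) m"
  then have f: "inv_letter i (w ! i + 1) m" "m (bu + (i + 1)) = int (num_unbordered k (cand i (w ! i)) (i + 1))"
    "m 14 = int (num_bordered k (cand i (w ! i)) n)"
    using wi by (auto simp: inv_letter_loop_def)
  have "cand i (w ! i) = take (i + 1) w" using i length_w by (simp add: take_Suc_conv_app_nth)
  then have "num_unbordered k (cand i (w ! i)) (i + 1) = unbordered_flag (i + 1)"
    using num_unbordered_short[of "i + 1" "cand i (w ! i)" k] length_cand[OF i] letters_cand[OF i wi]
      i length_w
    by (simp add: unbordered_flag_def)
  then have "unb_flags_stored (i + 1) m"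
    using f(1,2) by (auto simp: inv_letter_def unb_flags_stored_def le_Suc_eq)
  moreover have "rank_acc_upto i (w ! i + 1) = rank_acc (i + 1) + num_bordered k (cand i (w ! i)) n"
    using wi by (simp add: rank_acc_upto_def rank_acc_def)
  moreover have "periods_updating i 1 m"
    using f(1) by (simp add: inv_letter_def periods_stored_def periods_updating_def)
  ultimately show "inv_period i 1 (exec_block [Sub 17 17 14, LoadConst 19 1, LoadConst 21 0, Add 20 6 21] m)
    \<and> block_cells [Sub 17 17 14, LoadConst 19 1, LoadConst 21 0, Add 20 6 21] m \<subseteq> cells_used"
    using f by (simp add: inv_letter_def inv_period_def inv_period_core_def)
qed auto

lemma prefix_advance_correct:
  assumes i: "i < n"
  shows "hoare (inv_period i (i + 1)) (Block [LoadConst 21 1, Add 6 6 21, Sub 7 7 21]) (inv_prefix (i + 1))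
    3 cells_used"
proof (rule hoare_Block)
  fix m assume "inv_period i (i + 1) m"
  then have f: "inv_period_core i (i + 1) m" by (simp add: inv_period_def)
  have "nonperiod_flag i d = nonperiod_flag (i + 1) d" if "i + 1 \<le> d" for d
    using that has_period_ge_length[of "take i w" d] has_period_ge_length[of "take (i + 1) w" d]
    by (simp add: nonperiod_flag_def)
  then have "periods_stored (i + 1) m"
    using f by (auto simp: inv_period_core_def periods_updating_def periods_stored_def)
  then show "inv_prefix (i + 1) (exec_block [LoadConst 21 1, Add 6 6 21, Sub 7 7 21] m)
    \<and> block_cells [LoadConst 21 1, Add 6 6 21, Sub 7 7 21] m \<subseteq> cells_used"
    using f i by (simp add: inv_period_core_def inv_prefix_def of_nat_diff)
qed auto

lemma prefix_step_correct:
  assumes i: "i < n"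
  shows "hoare (inv_prefix i) prefix_step (inv_prefix (i + 1))
    (k * (n * (n * 27 + 16) + 10) + n * 16 + 16) cells_used"
proof -
  have "hoare (inv_prefix i)
      (Block [Add 21 2 6, LoadInd 8 21, LoadConst 9 1, LoadConst 21 0, Add 10 8 21, LoadConst 21 1, Add 11 6 21])
      (inv_letter_loop i 1) 7 cells_used"
  proof (rule hoare_Block)
    fix m assume h: "inv_prefix i m"
    then have f: "layout m" "word_stored m" by (auto simp: inv_prefix_def)
    then have "m (bw + i) = int (w ! i)" using i by (simp add: word_stored_def)
    then show "inv_letter_loop i 1 (exec_block [Add 21 2 6, LoadInd 8 21, LoadConst 9 1, LoadConst 21 0,
        Add 10 8 21, LoadConst 21 1, Add 11 6 21] m)
      \<and> block_cells [Add 21 2 6, LoadInd 8 21, LoadConst 9 1, LoadConst 21 0, Add 10 8 21,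
        LoadConst 21 1, Add 11 6 21] m \<subseteq> cells_used"
      using h layout_facts[OF f(1)] i
      by (simp add: inv_prefix_def inv_letter_loop_def inv_letter_def rank_acc_upto_def)
  qed auto
  then show ?thesis unfolding prefix_step_def
    by (rule hoare_Seq[OF _ hoare_Seq[OF letter_loop_correct[OF i] hoare_Seq[OF letters_done_correct[OF i]
          hoare_Seq[OF period_loop_correct[OF i] prefix_advance_correct[OF i] order_refl] order_refl]
          order_refl]])
      simp
qed

lemma prefix_loop_correct:
  "hoare (inv_prefix 0) (While 7 prefix_step) (inv_prefix n)
    (n * (k * (n * (n * 27 + 16) + 10) + n * 16 + 18) + 1) cells_used"
proof (rule hoare_For)
  fix i m assume "inv_prefix i m"
  then show "m 7 = int (n - i)" by (simp add: inv_prefix_def)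
next
  fix i assume "0 \<le> i" "i < n"
  then show "hoare (inv_prefix i) prefix_step (inv_prefix (Suc i))
      (k * (n * (n * 27 + 16) + 10) + n * 16 + 16)
    cells_used"
    using prefix_step_correct[of i] by simp
qed simp_all

definition saved_ok :: "mem \<Rightarrow> bool" where
  "saved_ok m \<longleftrightarrow> (\<forall>t<24. t < n \<longrightarrow> m (save_cell n k t) = int (w ! t))"

definition input_tail_ok :: "mem \<Rightarrow> bool" where
  "input_tail_ok m \<longleftrightarrow> (\<forall>t. 24 \<le> t \<longrightarrow> t < n \<longrightarrow> m (2 + t) = int (w ! t))"

definition inv_relocated :: "mem \<Rightarrow> bool" where
  "inv_relocated m \<longleftrightarrow> layout m \<and> saved_ok m \<and> input_tail_ok m \<and> (\<forall>a. bw \<le> a \<longrightarrow> m a = 0)"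

lemma save_cell_eq: "save_cell n k t = n + 24 * k + (t + 1) * k"
  by (simp add: save_cell_def algebra_simps)

lemma save_cell_bounds: "t < 24 \<Longrightarrow> 50 \<le> save_cell n k t \<and> save_cell n k t < bw"
proof -
  assume t: "t < 24"
  have "(25 + t) * k \<ge> 25 * 2" using k_ge_2 by (intro mult_le_mono) auto
  moreover have "(25 + t) * k < 49 * k" using t k_ge_2 by simp
  ultimately show ?thesis by (simp add: save_cell_def w_base_def)
qed

lemma relocate_memory:
  defines "m0 \<equiv> (input_mem k w)(1 := int (n + 24 * k))"
  defines "m1 \<equiv> exec_block (concat (map save_letter [0..<24])) m0"
  shows "exec_block relocate (input_mem k w)
      = m1(2 := int bw, 1 := int n, 21 := 1, 3 := int bp, 4 := int bu, 5 := int bq)"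
    and "m1 0 = int k" "\<And>t. t < 24 \<Longrightarrow> m1 (save_cell n k t) = input_mem k w (2 + t)"
    and "\<And>a. a \<noteq> 1 \<Longrightarrow> (\<forall>t<24. a \<noteq> save_cell n k t) \<Longrightarrow> m1 a = input_mem k w a"
    and "block_cells relocate (input_mem k w) \<subseteq> cells_used"
proof -
  have m0: "m0 0 = int k" "m0 1 = int (n + 24 * k)" "1 \<le> k" "26 \<le> n + 24 * k"
    using k_ge_2 by (simp_all add: m0_def input_mem_def)
  note saves = exec_save_letters[OF m0 order_refl, folded m1_def, unfolded save_cell_eq[symmetric]]
  then show "m1 0 = int k" "\<And>t. t < 24 \<Longrightarrow> m1 (save_cell n k t) = input_mem k w (2 + t)"
    "\<And>a. a \<noteq> 1 \<Longrightarrow> (\<forall>t<24. a \<noteq> save_cell n k t) \<Longrightarrow> m1 a = input_mem k w a"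
    by (simp_all add: m0_def input_mem_def save_cell_def)
  have "exec_block (replicate 24 (Add 1 1 0)) (input_mem k w) = m0"
    unfolding exec_block_add_replicate using length_w by (simp add: m0_def input_mem_def algebra_simps)
  then have split: "block_cells relocate (input_mem k w)
      = block_cells (replicate 24 (Add 1 1 0)) (input_mem k w)
      \<union> block_cells (concat (map save_letter [0..<24])) m0 \<union> block_cells set_bases m1"
    and "exec_block relocate (input_mem k w) = exec_block set_bases m1"
    by (simp_all add: relocate_def block_cells_append exec_block_append m1_def Un_assoc)
  have eq: "(\<lambda>t. n + 24 * k + (t + 1) * k) = save_cell n k" by (simp add: fun_eq_iff save_cell_eq)
  have "block_cells (concat (map save_letter [0..<24])) m0
      \<subseteq> {0, 1} \<union> (\<lambda>t. 2 + t) ` {..<24} \<union> save_cell n k ` {..<24}"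
    using block_cells_save_letters[OF m0 order_refl] unfolding eq .
  moreover have "{0, 1} \<union> (\<lambda>t. 2 + t) ` {..<24} \<subseteq> {..<26::nat}" by auto
  moreover have "{..<26} \<union> save_cell n k ` {..<24} \<subseteq> cells_used" by (auto simp: cells_def)
  ultimately have "block_cells (concat (map save_letter [0..<24])) m0 \<subseteq> cells_used" by blast
  moreover have "block_cells set_bases m1 \<subseteq> cells_used" by (simp add: set_bases_def)
  moreover have "block_cells (replicate 24 (Add 1 1 0)) (input_mem k w) \<subseteq> cells_used"
    using block_cells_add_replicate[of 24 "input_mem k w"] by (rule order_trans) simp
  ultimately show "block_cells relocate (input_mem k w) \<subseteq> cells_used"
    unfolding split by simp
  have "exec_block set_bases m1
      = m1(2 := int bw, 1 := int n, 21 := 1, 3 := int bp, 4 := int bu, 5 := int bq)"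
    using saves(1,2)
    by (simp add: set_bases_def w_base_def pow_base_def u_base_def q_base_def algebra_simps fun_eq_iff)
  with \<open>exec_block relocate (input_mem k w) = exec_block set_bases m1\<close>
  show "exec_block relocate (input_mem k w)
      = m1(2 := int bw, 1 := int n, 21 := 1, 3 := int bp, 4 := int bu, 5 := int bq)"
    by simp
qed

lemma inv_relocated_after_relocate: "inv_relocated (exec_block relocate (input_mem k w))"
proof -
  define m1 where "m1 = exec_block (concat (map save_letter [0..<24]))
      ((input_mem k w)(1 := int (n + 24 * k)))"
  note mem = relocate_memory[folded m1_def]
  let ?m = "m1(2 := int bw, 1 := int n, 21 := 1, 3 := int bp, 4 := int bu, 5 := int bq)"
  have "layout ?m" using mem(2) by (simp add: layout_def)
  moreover have "saved_ok ?m" unfolding saved_ok_def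
  proof (intro allI impI)
    fix t assume "t < 24" "t < n"
    then show "?m (save_cell n k t) = int (w ! t)"
      using mem(3) save_cell_bounds[of t] length_w by (simp add: input_mem_def)
  qed
  moreover have "input_tail_ok ?m" unfolding input_tail_ok_def
  proof (intro allI impI)
    fix t assume t: "24 \<le> t" "t < n"
    have "2 + t \<noteq> save_cell n k t'" for t'
    proof -
      have "2 * 25 \<le> k * (25 + t')" using k_ge_2 by (intro mult_le_mono) auto
      then show ?thesis using t by (simp add: save_cell_def algebra_simps)
    qed
    then show "?m (2 + t) = int (w ! t)" using mem(4)[of "2 + t"] t length_w by (simp add: input_mem_def)
  qed
  moreover have "?m a = 0" if "bw \<le> a" for a
  proof -
    have "\<forall>t<24. a \<noteq> save_cell n k t" using save_cell_bounds that by fastforce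
    then show ?thesis using that mem(4)[of a] w_base_ge length_w by (simp add: input_mem_def)
  qed
  ultimately show ?thesis unfolding inv_relocated_def mem(1) by blast
qed

lemma relocate_correct: "hoare (\<lambda>m. m = input_mem k w) (Block relocate) inv_relocated 84 cells_used"
proof (rule hoare_Block)
  show "list_all straight_line relocate" "length relocate \<le> 84"
    by (simp_all add: relocate_def save_letter_def set_bases_def upt_rec list_all_iff)
qed (use inv_relocated_after_relocate relocate_memory(5) in blast)

lemma saved_ok_update [simp]:
  "x < 26 \<Longrightarrow> saved_ok (m(x := v)) = saved_ok m" "saved_ok (m(bw + s := v)) = saved_ok m"
  using save_cell_bounds by (fastforce simp: saved_ok_def)+

lemma input_tail_ok_update [simp]:
  "x < 26 \<Longrightarrow> input_tail_ok (m(x := v)) = input_tail_ok m"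
    "input_tail_ok (m(bw + s := v)) = input_tail_ok m"
  using w_base_ge by (auto simp: input_tail_ok_def)

definition inv_copy :: "nat \<Rightarrow> mem \<Rightarrow> bool" where
  "inv_copy t m \<longleftrightarrow> layout m \<and> m 6 = int t \<and> m 7 = int (n - t) \<and> (\<forall>s<t. m (bw + s) = int (w ! s))
     \<and> saved_ok m \<and> input_tail_ok m \<and> (\<forall>a. bw + t \<le> a \<longrightarrow> m a = 0)"

lemma inv_copy_update_register [simp]: "8 \<le> x \<Longrightarrow> x < 26 \<Longrightarrow> inv_copy t (m(x := v)) = inv_copy t m"
  using w_base_ge by (simp add: inv_copy_def)

text \<open>Letters \<open>w ! t\<close> with \<open>t < 24\<close> are fetched from their save cells, the others from the input.\<close>
lemma fetch_letter_correct:
  assumes t: "t < n"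
  shows "hoare (\<lambda>m. inv_copy t m \<and> m 21 = int t - 24)
    (Cond (IsNeg 21) (Block [LoadConst 22 25, Add 22 22 6, Mul 22 22 0, Add 22 1 22, LoadInd 23 22])
      (Block [LoadConst 22 2, Add 22 22 6, LoadInd 23 22]))
    (\<lambda>m. inv_copy t m \<and> m 23 = int (w ! t)) 7 cells_used"
proof (rule hoare_Cond[where Tc = 5 and Td = 3]; (rule hoare_Block)?)
  fix m assume "(inv_copy t m \<and> m 21 = int t - 24) \<and> holds (IsNeg 21) m"
  then have f: "inv_copy t m" "t < 24" by auto
  then have g: "layout m" "m 6 = int t" "saved_ok m" by (auto simp: inv_copy_def)
  have "int n + (25 + int t) * int k = int (save_cell n k t)" by (simp add: save_cell_def)
  moreover have "m (save_cell n k t) = int (w ! t)" using g(3) f(2) t by (simp add: saved_ok_def)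
  moreover have "save_cell n k t \<in> cells_used" using f(2) by (auto simp: cells_def)
  ultimately show "(inv_copy t (exec_block [LoadConst 22 25, Add 22 22 6, Mul 22 22 0, Add 22 1 22,
        LoadInd 23 22] m)
      \<and> exec_block [LoadConst 22 25, Add 22 22 6, Mul 22 22 0, Add 22 1 22, LoadInd 23 22] m 23 = int (w ! t))
    \<and> block_cells [LoadConst 22 25, Add 22 22 6, Mul 22 22 0, Add 22 1 22, LoadInd 23 22] m \<subseteq> cells_used"
    using f g layout_facts[OF g(1)] save_cell_bounds[OF f(2)] by simp
next
  fix m assume "(inv_copy t m \<and> m 21 = int t - 24) \<and> \<not> holds (IsNeg 21) m"
  then have f: "inv_copy t m" "24 \<le> t" by auto
  then have g: "m 6 = int t" "input_tail_ok m" by (auto simp: inv_copy_def)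
  have "m (2 + t) = int (w ! t)" using g(2) f(2) t by (simp add: input_tail_ok_def)
  moreover have "2 + t \<in> cells_used" using t by (simp add: cells_def)
  ultimately show "(inv_copy t (exec_block [LoadConst 22 2, Add 22 22 6, LoadInd 23 22] m)
      \<and> exec_block [LoadConst 22 2, Add 22 22 6, LoadInd 23 22] m 23 = int (w ! t))
    \<and> block_cells [LoadConst 22 2, Add 22 22 6, LoadInd 23 22] m \<subseteq> cells_used"
    using f g by (simp add: nat_add_distrib)
qed auto

lemma copy_step_correct:
  assumes t: "t < n"
  shows "hoare (inv_copy t) copy_step (inv_copy (t + 1)) 14 cells_used"
proof -
  have s1: "hoare (inv_copy t) (Block [LoadConst 22 24, Sub 21 6 22])
      (\<lambda>m. inv_copy t m \<and> m 21 = int t - 24) 2 cells_used"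
    by (rule hoare_Block) (use w_base_ge in \<open>auto simp: inv_copy_def\<close>)
  have s3: "hoare (\<lambda>m. inv_copy t m \<and> m 23 = int (w ! t))
      (Block [Add 24 2 6, StoreInd 24 23, LoadConst 21 1, Add 6 6 21, Sub 7 7 21]) (inv_copy (t + 1)) 5 cells_used"
  proof (rule hoare_Block)
    fix m assume "inv_copy t m \<and> m 23 = int (w ! t)"
    then have f: "layout m" "m 6 = int t" "m 7 = int (n - t)" "\<forall>s<t. m (bw + s) = int (w ! s)"
      "saved_ok m" "input_tail_ok m" "\<forall>a. bw + t \<le> a \<longrightarrow> m a = 0" "m 23 = int (w ! t)"
      by (auto simp: inv_copy_def)
    let ?m = "m(24 := int bw + int t, bw + t := int (w ! t))"
    have "\<forall>s<t + 1. ?m (bw + s) = int (w ! s)" using f(4) by (auto simp: less_Suc_eq)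
    moreover have "\<forall>a. bw + (t + 1) \<le> a \<longrightarrow> ?m a = 0" using f(7) w_base_ge by auto
    moreover have "layout ?m" "saved_ok ?m" "input_tail_ok ?m" using f by simp_all
    ultimately show "inv_copy (t + 1) (exec_block [Add 24 2 6, StoreInd 24 23, LoadConst 21 1,
        Add 6 6 21, Sub 7 7 21] m)
      \<and> block_cells [Add 24 2 6, StoreInd 24 23, LoadConst 21 1, Add 6 6 21, Sub 7 7 21] m \<subseteq> cells_used"
      using f layout_facts[OF f(1)] t w_base_ge by (auto simp: inv_copy_def of_nat_diff)
  qed auto
  show ?thesis unfolding copy_step_def
    by (rule hoare_Seq[OF s1 hoare_Seq[OF fetch_letter_correct[OF t] s3 order_refl]]) simp
qed

lemma copy_loop_correct: "hoare (inv_copy 0) (While 7 copy_step) (inv_copy n) (n * 16 + 1) cells_used"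
proof (rule hoare_For)
  fix t m assume "inv_copy t m"
  then show "m 7 = int (n - t)" by (simp add: inv_copy_def)
next
  fix t assume "0 \<le> t" "t < n"
  then show "hoare (inv_copy t) copy_step (inv_copy (Suc t)) 14 cells_used"
    using copy_step_correct[of t] by simp
qed simp_all

lemma copy_init_correct:
  "hoare inv_relocated (Block [LoadConst 6 0, LoadConst 21 0, Add 7 1 21]) (inv_copy 0) 3 cells_used"
proof (rule hoare_Block)
  fix m assume "inv_relocated m"
  then show "inv_copy 0 (exec_block [LoadConst 6 0, LoadConst 21 0, Add 7 1 21] m)
    \<and> block_cells [LoadConst 6 0, LoadConst 21 0, Add 7 1 21] m \<subseteq> cells_used"
    using w_base_ge by (simp add: inv_relocated_def inv_copy_def layout_def)
qed auto

definition inv_power :: "nat \<Rightarrow> mem \<Rightarrow> bool" where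
  "inv_power e m \<longleftrightarrow> layout m \<and> m 6 = int e \<and> m 7 = int (n - e) \<and> word_stored m
     \<and> (\<forall>e'\<le>e. m (bp + e') = int (k ^ e')) \<and> (\<forall>a. bp + e < a \<longrightarrow> m a = 0)"

lemma power_init_correct:
  "hoare (inv_copy n) (Block [LoadConst 21 1, StoreInd 3 21, LoadConst 6 0, LoadConst 21 0, Add 7 1 21])
    (inv_power 0) 5 cells_used"
proof (rule hoare_Block)
  fix m assume "inv_copy n m"
  then have f: "layout m" "\<forall>s<n. m (bw + s) = int (w ! s)" "\<forall>a. bw + n \<le> a \<longrightarrow> m a = 0"
    by (auto simp: inv_copy_def)
  have "word_stored (m(bp := 1))" "layout (m(bp := 1))"
    using f(1,2) w_base_ge by (auto simp: word_stored_def bases_eq layout_def)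
  moreover have "\<forall>a. bp < a \<longrightarrow> (m(21 := 1, bp := 1)) a = 0" using f(3) w_base_ge by (auto simp: bases_eq)
  moreover have "bp \<in> cells_used" "26 \<le> bp" using in_cells(3)[of 0] w_base_ge by (simp_all add: bases_eq)
  ultimately show "inv_power 0 (exec_block [LoadConst 21 1, StoreInd 3 21, LoadConst 6 0, LoadConst 21 0,
      Add 7 1 21] m)
    \<and> block_cells [LoadConst 21 1, StoreInd 3 21, LoadConst 6 0, LoadConst 21 0, Add 7 1 21] m
      \<subseteq> cells_used"
    using f layout_facts[OF f(1)] by (simp add: inv_power_def)
qed auto

lemma power_step_correct:
  assumes e: "e < n"
  shows "hoare (inv_power e) power_step (inv_power (e + 1)) 8 cells_used"
  unfolding power_step_def
proof (rule hoare_Block)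
  fix m assume h: "inv_power e m"
  then have f: "layout m" "word_stored m" "\<forall>e'\<le>e. m (bp + e') = int (k ^ e')" "\<forall>a. bp + e < a \<longrightarrow> m a = 0"
    by (auto simp: inv_power_def)
  have "m (bp + e) = int (k ^ e)" using f(3) by simp
  moreover have "nat (int bp + int e + 1) = Suc (bp + e)" by simp
  moreover have "bp + e \<in> cells_used" "Suc (bp + e) \<in> cells_used"
    using e in_cells(3)[of "e + 1"] by simp_all
  moreover have "bw + s \<noteq> Suc (bp + e)" if "s < n" for s using that by (simp add: bases_eq)
  moreover have "26 \<le> bp" using w_base_ge by (simp add: bases_eq)
  ultimately show "inv_power (e + 1) (exec_block [Add 21 3 6, LoadInd 22 21, Mul 22 22 0, LoadConst 23 1,
      Add 21 21 23, StoreInd 21 22, Add 6 6 23, Sub 7 7 23] m)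
    \<and> block_cells [Add 21 3 6, LoadInd 22 21, Mul 22 22 0, LoadConst 23 1, Add 21 21 23, StoreInd 21 22,
      Add 6 6 23, Sub 7 7 23] m \<subseteq> cells_used"
    using h f layout_facts[OF f(1)] e w_base_ge
    by (auto simp: inv_power_def word_stored_def layout_def le_Suc_eq of_nat_diff)
qed auto

lemma power_loop_correct:
    "hoare (inv_power 0) (While 7 power_step) (inv_power n) (n * 10 + 1) cells_used"
proof (rule hoare_For)
  fix e m assume "inv_power e m"
  then show "m 7 = int (n - e)" by (simp add: inv_power_def)
next
  fix e assume "0 \<le> e" "e < n"
  then show "hoare (inv_power e) power_step (inv_power (Suc e)) 8 cells_used"
    using power_step_correct[of e] by simp
qed simp_all

lemma prefix_init_correct:
  "hoare (inv_power n) (Block [LoadConst 6 0, LoadConst 21 0, Add 7 1 21, LoadConst 17 0]) (inv_prefix 0)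
    4 cells_used"
proof (rule hoare_Block)
  fix m assume "inv_power n m"
  then have f: "layout m" "word_stored m" "\<forall>e\<le>n. m (bp + e) = int (k ^ e)" "\<forall>a. bp + n < a \<longrightarrow> m a = 0"
    by (auto simp: inv_power_def)
  have "periods_stored 0 m"
    using f(4) by (auto simp: periods_stored_def nonperiod_flag_def has_period_def bases_eq)
  then show "inv_prefix 0 (exec_block [LoadConst 6 0, LoadConst 21 0, Add 7 1 21, LoadConst 17 0] m)
    \<and> block_cells [LoadConst 6 0, LoadConst 21 0, Add 7 1 21, LoadConst 17 0] m \<subseteq> cells_used"
    using f layout_facts[OF f(1)]
    by (simp add: inv_prefix_def powers_stored_def unb_flags_stored_def rank_acc_def)
qed auto

lemma output_correct:
  "hoare (inv_prefix n) (Block [LoadConst 21 1, Add 0 17 21]) (\<lambda>m. m 0 = int (rankB k w)) 2 cells_used"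
proof (rule hoare_Block)
  fix m assume "inv_prefix n m"
  moreover have "rankB k w = 1 + rank_acc n"
    using rankB_eq_sum[of k w] letters_w length_w by (simp add: word_over_def rank_acc_def)
  ultimately show "exec_block [LoadConst 21 1, Add 0 17 21] m 0 = int (rankB k w)
    \<and> block_cells [LoadConst 21 1, Add 0 17 21] m \<subseteq> cells_used"
    by (simp add: inv_prefix_def)
qed auto

lemma rank_program_correct:
  "hoare (\<lambda>m. m = input_mem k w) rank_program (\<lambda>m. m 0 = int (rankB k w))
    (101 + 44 * n + 16 * n ^ 2 + 27 * k * n ^ 3 + 16 * k * n ^ 2 + 10 * k * n) cells_used"
proof -
  have "hoare (\<lambda>m. m = input_mem k w) rank_program (\<lambda>m. m 0 = int (rankB k w))
    (84 + (3 + ((n * 16 + 1) + (5 + ((n * 10 + 1) +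
      (4 + ((n * (k * (n * (n * 27 + 16) + 10) + n * 16 + 18) + 1)
      + 2))))))) cells_used"
    unfolding rank_program_def
    by (rule hoare_Seq[OF relocate_correct hoare_Seq[OF copy_init_correct hoare_Seq[OF copy_loop_correct
        hoare_Seq[OF power_init_correct hoare_Seq[OF power_loop_correct hoare_Seq[OF prefix_init_correct
        hoare_Seq[OF prefix_loop_correct output_correct order_refl] order_refl] order_refl] order_refl]
        order_refl] order_refl] order_refl])
  then show ?thesis
    by (rule hoare_conseq) (simp_all add: algebra_simps power2_eq_square power3_eq_cube)
qed

lemma running_time_le:
    "101 + 44 * n + 16 * n ^ 2 + 27 * k * n ^ 3 + 16 * k * n ^ 2 + 10 * k * n \<le> 300 * k * n ^ 3"
proof -
  have n: "n \<le> n ^ 3" "n ^ 2 \<le> n ^ 3" "1 \<le> n ^ 3"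
    using n_pos power_increasing[of 1 3 n] power_increasing[of 2 3 n] by simp_all
  then have "k * n \<le> k * n ^ 3" "k * n ^ 2 \<le> k * n ^ 3" "n ^ 3 \<le> k * n ^ 3"
    using k_ge_2 by simp_all
  with n show ?thesis by linarith
qed

lemma card_cells_le: "card cells_used \<le> 60 * n"
proof -
  have "card cells_used \<le> card ({..<26::nat} \<union> save_cell n k ` {..<24} \<union> {bw..<bq + n + 1})
      + card {..<n + 2}"
    unfolding cells_def by (rule card_Un_le)
  also have "\<dots> \<le> card ({..<26::nat} \<union> save_cell n k ` {..<24})
      + card {bw..<bq + n + 1} + card {..<n + 2}"
    using card_Un_le by (intro add_right_mono)
  also have "\<dots> \<le> 26 + card (save_cell n k ` {..<24}) + card {bw..<bq + n + 1} + card {..<n + 2}"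
    using card_Un_le[of "{..<26::nat}"] by simp
  also have "\<dots> \<le> 26 + 24 + (4 * n + 3) + (n + 2)"
    using card_image_le[of "{..<24::nat}" "save_cell n k"] by (simp add: bases_eq)
  finally show ?thesis using n_pos by simp
qed

lemma rank_program_runs:
  "\<exists>t. t \<le> 300 * k * n ^ 3
     \<and> halted (compile 0 rank_program) (run (compile 0 rank_program) t (init_config k w))
     \<and> snd (run (compile 0 rank_program) t (init_config k w)) 0 = int (rankB k w)
     \<and> card ({..<n + 2} \<union> used_cells (compile 0 rank_program) t (init_config k w)) \<le> 300 * n"
proof -
  obtain t where t: "t \<le> 101 + 44 * n + 16 * n ^ 2 + 27 * k * n ^ 3 + 16 * k * n ^ 2 + 10 * k * n"
    and run: "halted (compile 0 rank_program) (run (compile 0 rank_program) t (init_config k w))"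
      "snd (run (compile 0 rank_program) t (init_config k w)) 0 = int (rankB k w)"
      "used_cells (compile 0 rank_program) t (init_config k w) \<subseteq> cells_used"
    using hoare_compile[OF rank_program_correct] unfolding init_config_def by blast
  have "{..<n + 2} \<subseteq> cells_used" "finite cells_used" by (auto simp: cells_def)
  then have "card ({..<n + 2} \<union> used_cells (compile 0 rank_program) t (init_config k w))
      \<le> card cells_used"
    using run(3) by (intro card_mono) auto
  then show ?thesis using t running_time_le run card_cells_le by (intro exI[of _ t]) simp
qed

end

theorem theorem9:
  shows "\<exists>(P :: instr list) (c :: nat).
    \<forall>k n w. n \<ge> 1 \<longrightarrow> k \<ge> 2 \<longrightarrow> length w = n \<longrightarrow> word_over k w \<longrightarrow>
      (\<exists>t. t \<le> c * k * n ^ 3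
         \<and> halted P (run P t (init_config k w))
         \<and> snd (run P t (init_config k w)) 0 = int (rankB k w)
         \<and> card ({..<n + 2} \<union> used_cells P t (init_config k w)) \<le> c * n)"
  by (rule exI[of _ "compile 0 rank_program"], rule exI[of _ 300],
      intro allI impI rank_instance.rank_program_runs,
      unfold_locales) (auto simp: word_over_def)

end
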